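(* Let $(\Lambda,d)$ be a finitely aligned $k$-graph with groupoid of germs ${\mathcal G}_\Lambda$. The family $\{\Psi(F),\ {\mathcal G}_\Lambda\setminus\Psi(F): F\in S_\Lambda\}$ is a subbasis for a locally compact Hausdorff topology on ${\mathcal G}_\Lambda$ in which each $\Psi(F)$ is compact.
   Context: A $k$-graph $(\Lambda,d)$ is a countable small category $\Lambda$ (objects identified with identity morphisms) with a functor $d:\Lambda\to\mathbb N^k$ satisfying unique factorization: whenever $d(\lambda)=m+n$ there are unique $\mu,\nu$ with $d(\mu)=m$, $d(\nu)=n$, $\lambda=\mu\nu$. $r,s$ range/source. $\Lambda^{\min}(\lambda,\mu)=\{(\alpha,\beta):\lambda\alpha=\mu\beta,\ d(\lambda\alpha)=d(\lambda)\vee d(\mu)\}$; finitely aligned means all are finite. $S_\Lambda$: finite $F\subseteq\{(\lambda,\mu):s(\lambda)=s(\mu)\}$ with distinct $(\lambda,\mu),(\nu,\omega)\in F$ satisfying $\Lambda^{\min}(\lambda,\nu)=\Lambda^{\min}(\mu,\omega)=\emptyset$; inverse semigroup with $FG=\bigcup_{(\lambda,\mu)\in F,(\xi,\eta)\in G}\{(\lambda\alpha,\eta\beta):(\alpha,\beta)\in\Lambda^{\min}(\mu,\xi)\}$, $F^*=\{(\mu,\lambda):(\lambda,\mu)\in F\}$, idempotents $E(S_\Lambda)$. $\Omega_{k,m}$ ($m\in(\mathbb N\cup\{\infty\})^k$): objects $\{p\in\mathbb N^k:p\le m\}$, morphisms $(p,q)$, $p\le q\le m$, $r(p,q)=p$,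 $s(p,q)=q$, $d(p,q)=q-p$. $X_\Lambda$ = degree-preserving functors $x:\Omega_{k,m}\to\Lambda$, $d(x)=m$, $r(x)=x(0,0)$; $\sigma^m x(p,q)=x(p+m,q+m)$; $\lambda x$ ($s(\lambda)=x(0,0)$) has $(\lambda x)(0,n)=\lambda x(0,n-d(\lambda))$. $D_F=\{x:\exists(\lambda,\mu)\in F,\ x(0,d(\mu))=\mu\}$; $\theta_F(x)=\lambda\sigma^{d(\mu)}x$. $X_\Lambda$ is topologized by the subbasis $\{D_F,X_\Lambda\setminus D_F\}$ (locally compact Hausdorff). ${\mathcal G}_\Lambda$: germs $[F,x]$ of pairs $(F,x)$, $x\in D_F$, under $(F,x)\sim(G,y)$ iff $x=y$ and some $P\in E(S_\Lambda)$ has $x\in D_P$, $FP=GP$; product $[F,\theta_G(x)][G,x]=[FG,x]$, inverse $[F^*,\theta_F(x)]$, $r([F,x])=\theta_F(x)$, $s([F,x])=x$. $\Psi(F)=\{[F,x]:x\in D_F\}$. *)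

theory Defs
  imports "HOL-Analysis.Analysis" "HOL-Library.Extended_Nat" "HOL-Library.Function_Algebras"
begin

text \<open>A k-graph: a countable small category whose objects are identified with
 the identity morphisms (elements v of Mor with rng v = v), with composition
 cmp, range rng, source src, and degree functor deg into N^k, where N^k is
 modelled as functions nat to nat vanishing at every coordinate i >= k.\<close>

record 'a kgraph =
  Mor :: "'a set"
  rng :: "'a \<Rightarrow> 'a"
  src :: "'a \<Rightarrow> 'a"
  cmp :: "'a \<Rightarrow> 'a \<Rightarrow> 'a"
  deg :: "'a \<Rightarrow> nat \<Rightarrow> nat"

definition is_kgraph :: "nat \<Rightarrow> 'a kgraph \<Rightarrow> bool" where
  "is_kgraph k L \<longleftrightarrow>
     countable (Mor L) \<and>
     (\<forall>l\<in>Mor L. rng L l \<in> Mor L \<and> src L l \<in> Mor L \<and>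
        rng L (rng L l) = rng L l \<and> src L (rng L l) = rng L l \<and>
        rng L (src L l) = src L l \<and> src L (src L l) = src L l) \<and>
     (\<forall>l\<in>Mor L. \<forall>m\<in>Mor L. src L l = rng L m \<longrightarrow>
        cmp L l m \<in> Mor L \<and> rng L (cmp L l m) = rng L l \<and> src L (cmp L l m) = src L m) \<and>
     (\<forall>l\<in>Mor L. \<forall>m\<in>Mor L. \<forall>n\<in>Mor L. src L l = rng L m \<longrightarrow> src L m = rng L n \<longrightarrow>
        cmp L (cmp L l m) n = cmp L l (cmp L m n)) \<and>
     (\<forall>l\<in>Mor L. cmp L (rng L l) l = l \<and> cmp L l (src L l) = l) \<and>
     (\<forall>l\<in>Mor L. \<forall>i\<ge>k. deg L l i = 0) \<and>
     (\<forall>l\<in>Mor L. \<forall>m\<in>Mor L. src L l = rng L m \<longrightarrow> deg L (cmp L l m) = deg L l + deg L m) \<and>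
     (\<forall>l\<in>Mor L. \<forall>p q. deg L l = p + q \<longrightarrow>
        (\<exists>!(m, n). m \<in> Mor L \<and> n \<in> Mor L \<and> src L m = rng L n \<and>
                   deg L m = p \<and> deg L n = q \<and> l = cmp L m n))"

definition Lmin :: "'a kgraph \<Rightarrow> 'a \<Rightarrow> 'a \<Rightarrow> ('a \<times> 'a) set" where
  "Lmin L l m = {(a, b). a \<in> Mor L \<and> b \<in> Mor L \<and> src L l = rng L a \<and> src L m = rng L b \<and>
      cmp L l a = cmp L m b \<and> deg L (cmp L l a) = sup (deg L l) (deg L m)}"

definition finitely_aligned :: "'a kgraph \<Rightarrow> bool" where
  "finitely_aligned L \<longleftrightarrow> (\<forall>l\<in>Mor L. \<forall>m\<in>Mor L. finite (Lmin L l m))"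

definition SL :: "'a kgraph \<Rightarrow> ('a \<times> 'a) set set" where
  "SL L = {F. finite F \<and> F \<subseteq> {(l, m). l \<in> Mor L \<and> m \<in> Mor L \<and> src L l = src L m} \<and>
      (\<forall>(l, m)\<in>F. \<forall>(n, w)\<in>F. (l, m) \<noteq> (n, w) \<longrightarrow> Lmin L l n = {} \<and> Lmin L m w = {})}"

definition smult :: "'a kgraph \<Rightarrow> ('a \<times> 'a) set \<Rightarrow> ('a \<times> 'a) set \<Rightarrow> ('a \<times> 'a) set" where
  "smult L F G = (\<Union>(l, m)\<in>F. \<Union>(xi, eta)\<in>G.
      {(cmp L l a, cmp L eta b) | a b. (a, b) \<in> Lmin L m xi})"

definition sinv :: "('a \<times> 'a) set \<Rightarrow> ('a \<times> 'a) set" where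
  "sinv F = (\<lambda>(l, m). (m, l)) ` F"

definition ESL :: "'a kgraph \<Rightarrow> ('a \<times> 'a) set set" where
  "ESL L = {P \<in> SL L. smult L P P = P}"

text \<open>Paths: a path x of degree m is represented by the pair (m, f) with
 f(p,q) = x(p,q) for morphisms (p,q) of Omega_{k,m}, and f = undefined elsewhere.\<close>

type_synonym 'a path = "(nat \<Rightarrow> enat) \<times> ((nat \<Rightarrow> nat) \<times> (nat \<Rightarrow> nat) \<Rightarrow> 'a)"

definition omega_obj :: "nat \<Rightarrow> (nat \<Rightarrow> enat) \<Rightarrow> (nat \<Rightarrow> nat) set" where
  "omega_obj k m = {p. (\<forall>i\<ge>k. p i = 0) \<and> (\<forall>i. enat (p i) \<le> m i)}"

definition omega_mor :: "nat \<Rightarrow> (nat \<Rightarrow> enat) \<Rightarrow> (nat \<Rightarrow> nat) \<Rightarrow> (nat \<Rightarrow> nat) \<Rightarrow> bool" where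
  "omega_mor k m p q \<longleftrightarrow> p \<in> omega_obj k m \<and> q \<in> omega_obj k m \<and> p \<le> q"

definition is_path :: "nat \<Rightarrow> 'a kgraph \<Rightarrow> 'a path \<Rightarrow> bool" where
  "is_path k L x \<longleftrightarrow>
     (\<forall>i\<ge>k. fst x i = 0) \<and>
     (\<forall>p q. omega_mor k (fst x) p q \<longrightarrow>
        snd x (p, q) \<in> Mor L \<and> deg L (snd x (p, q)) = q - p \<and>
        rng L (snd x (p, q)) = snd x (p, p) \<and> src L (snd x (p, q)) = snd x (q, q)) \<and>
     (\<forall>p q t. omega_mor k (fst x) p q \<longrightarrow> omega_mor k (fst x) q t \<longrightarrow>
        cmp L (snd x (p, q)) (snd x (q, t)) = snd x (p, t)) \<and>
     (\<forall>p q. \<not> omega_mor k (fst x) p q \<longrightarrow> snd x (p, q) = undefined)"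

definition XL :: "nat \<Rightarrow> 'a kgraph \<Rightarrow> 'a path set" where
  "XL k L = {x. is_path k L x}"

definition DF :: "nat \<Rightarrow> 'a kgraph \<Rightarrow> ('a \<times> 'a) set \<Rightarrow> 'a path set" where
  "DF k L F = {x \<in> XL k L. \<exists>(l, m)\<in>F.
      (\<lambda>i. enat (deg L m i)) \<le> fst x \<and> snd x (0, deg L m) = m}"

definition germ_rel :: "nat \<Rightarrow> 'a kgraph \<Rightarrow> (('a \<times> 'a) set \<times> 'a path) \<Rightarrow> (('a \<times> 'a) set \<times> 'a path) \<Rightarrow> bool" where
  "germ_rel k L Fx Gy \<longleftrightarrow>
     (case Fx of (F, x) \<Rightarrow> case Gy of (G, y) \<Rightarrow>
        F \<in> SL L \<and> G \<in> SL L \<and> x \<in> DF k L F \<and> y \<in> DF k L G \<and> x = y \<and>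
        (\<exists>P\<in>ESL L. x \<in> DF k L P \<and> smult L F P = smult L G P))"

definition germ :: "nat \<Rightarrow> 'a kgraph \<Rightarrow> ('a \<times> 'a) set \<Rightarrow> 'a path \<Rightarrow> (('a \<times> 'a) set \<times> 'a path) set" where
  "germ k L F x = {Gy. germ_rel k L (F, x) Gy}"

definition GL :: "nat \<Rightarrow> 'a kgraph \<Rightarrow> (('a \<times> 'a) set \<times> 'a path) set set" where
  "GL k L = {germ k L F x | F x. F \<in> SL L \<and> x \<in> DF k L F}"

definition Psi :: "nat \<Rightarrow> 'a kgraph \<Rightarrow> ('a \<times> 'a) set \<Rightarrow> (('a \<times> 'a) set \<times> 'a path) set set" where
  "Psi k L F = {germ k L F x | x. x \<in> DF k L F}"

end

theory Submission
  imports Defs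
begin

text \<open>Every germ \<open>[F, x]\<close> lies in the subbasic open set \<open>\<Psi>(F)\<close>, and two distinct germs are
  separated by some \<open>\<Psi>(H)\<close> and its complement: germs at the same path by \<open>\<Psi>(F)\<close> itself, germs at
  different paths by the restriction of \<open>F\<close> to a cylinder containing one path but not the other.
  So the topology is Hausdorff, and it is locally compact once every \<open>\<Psi>(F)\<close> is compact.

  For \<open>(\<lambda>, \<mu>) \<in> F\<close>, a path in \<open>Z(\<mu>)\<close> is determined by its set of initial segments, and the sets
  arising this way are the directed hereditary sets of morphisms containing \<open>\<mu>\<close>. By finite
  alignment they form a closed, hence compact, subset of the Cantor space \<open>{0,1}\<^sup>\<Lambda>\<close>, and the map
  sending such a set to the germ of \<open>F\<close> at the corresponding path is continuous: whether that germ
  lies in \<open>\<Psi>(H)\<close> depends on finitely many initial segments only. Hence \<open>\<Psi>(F)\<close>, a finite union of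
  continuous images of compact sets, is compact.\<close>

section \<open>Subbases closed under complements\<close>

lemma topspace_generated_by_complements:
  assumes "\<And>i. i \<in> I \<Longrightarrow> B i \<subseteq> X" and "I \<noteq> {}"
  shows "topspace (topology_generated_by ({B i | i. i \<in> I} \<union> {X - B i | i. i \<in> I})) = X"
proof -
  obtain i where "i \<in> I" using assms(2) by blast
  have "X \<subseteq> \<Union> ({B i | i. i \<in> I} \<union> {X - B i | i. i \<in> I})"
  proof
    fix x assume "x \<in> X"
    then have "x \<in> B i \<or> x \<in> X - B i" by blast
    then show "x \<in> \<Union> ({B i | i. i \<in> I} \<union> {X - B i | i. i \<in> I})"
      using \<open>i \<in> I\<close> by blast
  qed
  then show ?thesis using assms(1) by auto
qed

lemma Hausdorff_space_generated_by_complements: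
  assumes "\<And>i. i \<in> I \<Longrightarrow> B i \<subseteq> X" and "I \<noteq> {}"
    and separate: "\<And>x y. x \<in> X \<Longrightarrow> y \<in> X \<Longrightarrow> x \<noteq> y \<Longrightarrow>
                     \<exists>i\<in>I. x \<in> B i \<and> y \<notin> B i \<or> y \<in> B i \<and> x \<notin> B i"
  shows "Hausdorff_space (topology_generated_by ({B i | i. i \<in> I} \<union> {X - B i | i. i \<in> I}))"
    (is "Hausdorff_space ?T")
proof -
  have "\<exists>U V. openin ?T U \<and> openin ?T V \<and> x \<in> U \<and> y \<in> V \<and> disjnt U V"
    if xy: "x \<in> X" "y \<in> X" "x \<noteq> y" for x y
  proof -
    obtain i where i: "i \<in> I" "x \<in> B i \<and> y \<notin> B i \<or> y \<in> B i \<and> x \<notin> B i"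
      using separate[OF xy] by blast
    have open_B: "openin ?T (B i)" and open_co_B: "openin ?T (X - B i)"
      using \<open>i \<in> I\<close> by (blast intro: topology_generated_by_Basis)+
    from i(2) show ?thesis
    proof
      assume "x \<in> B i \<and> y \<notin> B i"
      then show ?thesis
        by (intro exI[of _ "B i"] exI[of _ "X - B i"]) (use open_B open_co_B xy in \<open>auto simp: disjnt_def\<close>)
    next
      assume "y \<in> B i \<and> x \<notin> B i"
      then show ?thesis
        by (intro exI[of _ "X - B i"] exI[of _ "B i"]) (use open_B open_co_B xy in \<open>auto simp: disjnt_def\<close>)
    qed
  qed
  then show ?thesis
    using topspace_generated_by_complements[OF assms(1,2)] unfolding Hausdorff_space_def
    by (intro allI impI) (elim conjE, simp)
qed

lemma locally_compact_space_generated_by_complements: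
  assumes "\<And>i. i \<in> I \<Longrightarrow> B i \<subseteq> X" and "I \<noteq> {}"
    and "\<And>x. x \<in> X \<Longrightarrow>
           \<exists>i\<in>I. x \<in> B i \<and> compactin (topology_generated_by ({B i | i. i \<in> I} \<union> {X - B i | i. i \<in> I})) (B i)"
  shows "locally_compact_space (topology_generated_by ({B i | i. i \<in> I} \<union> {X - B i | i. i \<in> I}))"
    (is "locally_compact_space ?T")
proof -
  have "\<exists>U K. openin ?T U \<and> compactin ?T K \<and> x \<in> U \<and> U \<subseteq> K" if x: "x \<in> X" for x
  proof -
    obtain i where i: "i \<in> I" "x \<in> B i" "compactin ?T (B i)" using assms(3)[OF x] by blast
    then have "openin ?T (B i)" by (blast intro: topology_generated_by_Basis)
    with i show ?thesis by (intro exI[of _ "B i"]) simp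
  qed
  then show ?thesis
    using topspace_generated_by_complements[OF assms(1,2)] unfolding locally_compact_space_def
    by simp
qed

lemma continuous_map_generated_by_complements:
  assumes "\<And>i. i \<in> I \<Longrightarrow> B i \<subseteq> X" and "I \<noteq> {}" and "f ` topspace T \<subseteq> X"
    and "\<And>i. i \<in> I \<Longrightarrow> openin T {t \<in> topspace T. f t \<in> B i}"
    and "\<And>i. i \<in> I \<Longrightarrow> openin T {t \<in> topspace T. f t \<notin> B i}"
  shows "continuous_map T (topology_generated_by ({B i | i. i \<in> I} \<union> {X - B i | i. i \<in> I})) f"
proof (rule continuous_on_generated_topo)
  fix U assume "U \<in> {B i | i. i \<in> I} \<union> {X - B i | i. i \<in> I}"
  then obtain i where "i \<in> I" "U = B i \<or> U = X - B i" by blast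
  moreover have "f -` B i \<inter> topspace T = {t \<in> topspace T. f t \<in> B i}"
    and "f -` (X - B i) \<inter> topspace T = {t \<in> topspace T. f t \<notin> B i}"
    using assms(3) by blast+
  ultimately show "openin T (f -` U \<inter> topspace T)"
    using assms(4,5) by metis
next
  show "f ` topspace T \<subseteq> \<Union> ({B i | i. i \<in> I} \<union> {X - B i | i. i \<in> I})"
    using assms(3) topspace_generated_by_complements[OF assms(1,2)] by simp
qed

section \<open>The Cantor space of predicates\<close>

abbreviation pred_topology :: "('a \<Rightarrow> bool) topology" where
  "pred_topology \<equiv> product_topology (\<lambda>_. discrete_topology UNIV) UNIV"

lemma compact_space_pred_topology: "compact_space pred_topology"
  by (simp add: compact_space_product_topology compact_space_discrete_topology)

lemma openin_pred_topology_eq: "openin pred_topology {S. S a = b}"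
proof -
  have "continuous_map pred_topology (discrete_topology UNIV) (\<lambda>S. S a)"
    by (rule continuous_map_product_projection) simp
  then have "openin pred_topology {S \<in> topspace pred_topology. S a \<in> {b}}"
    by (rule openin_continuous_map_preimage) simp
  then show ?thesis by simp
qed

lemma openin_pred_topology_holds: "openin pred_topology {S. S a}"
  using openin_pred_topology_eq[of a True] by simp

lemma openin_pred_topology_fails: "openin pred_topology {S. \<not> S a}"
  using openin_pred_topology_eq[of a False] by simp

lemma openin_pred_topology_Bex: "openin pred_topology {S. \<exists>a\<in>A. S a}"
proof -
  have "{S. \<exists>a\<in>A. S a} = (\<Union>a\<in>A. {S. S a})" by auto
  then show ?thesis by (auto intro: openin_pred_topology_holds)
qed

lemma openin_pred_topology_Ball_fails:
  assumes "finite A" shows "openin pred_topology {S. \<forall>a\<in>A. \<not> S a}"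
  using assms
proof (induction A rule: finite_induct)
  case (insert a A)
  have "{S. \<forall>c\<in>insert a A. \<not> S c} = {S. \<not> S a} \<inter> {S. \<forall>c\<in>A. \<not> S c}" by auto
  then show ?case using openin_Int[OF openin_pred_topology_fails insert.IH] by simp
qed (use openin_topspace[of pred_topology] in simp)

lemma closedin_pred_topology_holds: "closedin pred_topology {S. S a}"
proof -
  have "topspace pred_topology - {S. S a} = {S. \<not> S a}" by auto
  then show ?thesis unfolding closedin_def using openin_pred_topology_fails[of a] by simp
qed

lemma closedin_pred_topology_All:
  assumes "\<And>t. openin pred_topology {S. \<not> Q t S}"
  shows "closedin pred_topology {S. \<forall>t. Q t S}"
proof -
  have "topspace pred_topology - {S. \<forall>t. Q t S} = (\<Union>t. {S. \<not> Q t S})" by auto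
  then show ?thesis unfolding closedin_def using assms by auto
qed

lemma closedin_pred_topology_All2:
  assumes "\<And>t u. openin pred_topology {S. \<not> Q t u S}"
  shows "closedin pred_topology {S. \<forall>t u. Q t u S}"
proof -
  have "topspace pred_topology - {S. \<forall>t u. Q t u S} = (\<Union>t. \<Union>u. {S. \<not> Q t u S})" by auto
  then show ?thesis unfolding closedin_def using assms by (auto intro!: openin_Union)
qed

lemma enat_le_SUP_imp_ex:
  assumes "enat c \<le> (SUP a\<in>A. enat (f a))" and "A \<noteq> {}"
  shows "\<exists>a\<in>A. c \<le> f a"
proof (cases c)
  case 0 then show ?thesis using assms(2) by blast
next
  case (Suc c')
  then have "enat c' < (SUP a\<in>A. enat (f a))" using assms(1) by (simp add: Suc_ile_eq)
  then show ?thesis unfolding less_SUP_iff using Suc by (auto simp: Suc_le_eq)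
qed

lemma le_fun_add_diff: "(p :: 'a \<Rightarrow> nat) \<le> q \<Longrightarrow> q = p + (q - p)"
  by (auto simp: fun_eq_iff le_fun_def)

lemma omega_obj_downward_closed:
  assumes "q \<in> omega_obj k m" and "p \<le> q"
  shows "p \<in> omega_obj k m"
proof -
  have q: "\<forall>i\<ge>k. q i = 0" "\<forall>i. enat (q i) \<le> m i" and pq: "\<And>i. p i \<le> q i"
    using assms unfolding omega_obj_def le_fun_def by simp_all
  have "p i = 0" if "i \<ge> k" for i using q(1) pq[of i] that by simp
  moreover have "enat (p i) \<le> m i" for i using q(2) pq[of i] by (meson enat_ord_simps(1) order_trans)
  ultimately show ?thesis unfolding omega_obj_def by simp
qed

lemma omega_obj_sup: "p \<in> omega_obj k m \<Longrightarrow> q \<in> omega_obj k m \<Longrightarrow> sup p q \<in> omega_obj k m"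
  unfolding omega_obj_def by (simp add: sup_fun_def sup_nat_def max_def)

lemma zero_in_omega_obj: "0 \<in> omega_obj k m"
  unfolding omega_obj_def by (simp add: zero_enat_def[symmetric])

lemma omega_obj_subset_imp_le:
  assumes sub: "omega_obj k a \<subseteq> omega_obj k b" and a: "\<forall>i\<ge>k. a i = 0"
  shows "a i \<le> b i"
proof (rule ccontr)
  assume "\<not> a i \<le> b i"
  then obtain c where c: "b i = enat c" "enat (Suc c) \<le> a i"
    by (cases "b i") (auto simp: Suc_ile_eq)
  then have "i < k" using a by (metis enat_ord_simps(2) le_zero_eq not_less zero_enat_def zero_less_Suc)
  define p where "p = (\<lambda>j. if j = i then Suc c else (0::nat))"
  have "p \<in> omega_obj k a"
    unfolding omega_obj_def p_def using c(2) \<open>i < k\<close> by (auto simp: zero_enat_def[symmetric])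
  then have "enat (p i) \<le> b i" using sub unfolding omega_obj_def by blast
  then show False using c(1) unfolding p_def by simp
qed

locale k_graph =
  fixes k :: nat and L :: "'a kgraph"
  assumes is_kgraph: "is_kgraph k L"
begin

definition composable :: "'a \<Rightarrow> 'a \<Rightarrow> bool" where
  "composable a b \<longleftrightarrow> a \<in> Mor L \<and> b \<in> Mor L \<and> src L a = rng L b"

lemma
  assumes "l \<in> Mor L"
  shows rng_in_Mor: "rng L l \<in> Mor L" and src_in_Mor: "src L l \<in> Mor L"
    and rng_rng: "rng L (rng L l) = rng L l" and src_rng: "src L (rng L l) = rng L l"
    and rng_src: "rng L (src L l) = src L l"
  using is_kgraph assms unfolding is_kgraph_def by auto

lemma
  assumes "composable a b"
  shows cmp_in_Mor: "cmp L a b \<in> Mor L" and rng_cmp: "rng L (cmp L a b) = rng L a"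
    and src_cmp: "src L (cmp L a b) = src L b" and deg_cmp: "deg L (cmp L a b) = deg L a + deg L b"
  using is_kgraph assms unfolding is_kgraph_def composable_def by auto

lemma cmp_assoc:
  assumes "composable a b" "composable b e"
  shows "cmp L (cmp L a b) e = cmp L a (cmp L b e)"
  using is_kgraph assms unfolding is_kgraph_def composable_def by auto

lemma cmp_rng_id: "l \<in> Mor L \<Longrightarrow> cmp L (rng L l) l = l"
  and cmp_src_id: "l \<in> Mor L \<Longrightarrow> cmp L l (src L l) = l"
  using is_kgraph unfolding is_kgraph_def by auto

lemma composable_rng_id: "l \<in> Mor L \<Longrightarrow> composable (rng L l) l"
  and composable_src_id: "l \<in> Mor L \<Longrightarrow> composable l (src L l)"
  by (auto simp: composable_def rng_in_Mor src_in_Mor src_rng rng_src)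

lemma deg_beyond_k: "l \<in> Mor L \<Longrightarrow> k \<le> i \<Longrightarrow> deg L l i = 0"
  using is_kgraph unfolding is_kgraph_def by auto

lemma unique_factorisation:
  assumes "l \<in> Mor L" "deg L l = p + q"
  shows "\<exists>!(m, n). m \<in> Mor L \<and> n \<in> Mor L \<and> src L m = rng L n \<and>
                   deg L m = p \<and> deg L n = q \<and> l = cmp L m n"
  using is_kgraph assms unfolding is_kgraph_def by blast

lemma factorisation:
  assumes "l \<in> Mor L" "deg L l = p + q"
  obtains u v where "composable u v" "deg L u = p" "deg L v = q" "l = cmp L u v"
  using unique_factorisation[OF assms] unfolding composable_def by auto

lemma factorisation_eq:
  assumes "composable u v" "composable u' v'" "cmp L u v = cmp L u' v'" "deg L u = deg L u'"
  shows "u = u' \<and> v = v'"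
proof -
  let ?l = "cmp L u v"
  have deg_l: "deg L ?l = deg L u + deg L v" by (rule deg_cmp[OF assms(1)])
  have "deg L ?l = deg L u' + deg L v'" using deg_cmp[OF assms(2)] assms(3) by simp
  then have "deg L v = deg L v'" using deg_l assms(4) by simp
  moreover have "\<exists>!(m, n). m \<in> Mor L \<and> n \<in> Mor L \<and> src L m = rng L n \<and>
                   deg L m = deg L u \<and> deg L n = deg L v \<and> ?l = cmp L m n"
    by (rule unique_factorisation[OF cmp_in_Mor[OF assms(1)] deg_l])
  ultimately show ?thesis
    using assms unfolding composable_def by (metis (mono_tags, lifting) case_prodI prod.inject)
qed

lemma deg_vertex:
  assumes "v \<in> Mor L" "rng L v = v" shows "deg L v = 0"
proof -
  have "composable v v" using assms rng_in_Mor src_rng by (metis composable_def)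
  then have "deg L (cmp L v v) = deg L v + deg L v" by (rule deg_cmp)
  moreover have "cmp L v v = v" using cmp_rng_id[OF assms(1)] assms by simp
  ultimately show "deg L v = 0" by (auto simp: fun_eq_iff)
qed

lemma deg_rng: "l \<in> Mor L \<Longrightarrow> deg L (rng L l) = 0"
  and deg_src: "l \<in> Mor L \<Longrightarrow> deg L (src L l) = 0"
  by (auto intro: deg_vertex simp: rng_in_Mor src_in_Mor rng_rng rng_src)

lemma deg_zero_vertex:
  assumes "l \<in> Mor L" "deg L l = 0"
  shows "rng L l = l" and "src L l = l"
proof -
  have "rng L l = l \<and> l = src L l"
    by (rule factorisation_eq[OF composable_rng_id[OF assms(1)] composable_src_id[OF assms(1)]])
       (use cmp_rng_id[OF assms(1)] cmp_src_id[OF assms(1)] deg_rng[OF assms(1)] assms(2) in auto)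
  then show "rng L l = l" "src L l = l" by auto
qed

lemma cmp_left_cancel:
  assumes "composable e a" "composable e b" "cmp L e a = cmp L e b" shows "a = b"
  using factorisation_eq[OF assms] by simp

lemma cmp_right_cancel:
  assumes "composable a e" "composable b e" "cmp L a e = cmp L b e" shows "a = b"
proof -
  have "deg L a + deg L e = deg L b + deg L e" using deg_cmp[OF assms(1)] deg_cmp[OF assms(2)] assms(3) by metis
  then have "deg L a = deg L b" by simp
  then show ?thesis using factorisation_eq[OF assms] by simp
qed

lemma factorisation_refine:
  assumes "composable u v" "composable u' v'" "cmp L u v = cmp L u' v'" "deg L u \<le> deg L u'"
  obtains w where "composable u w" "composable w v'" "u' = cmp L u w" "v = cmp L w v'"
proof -
  have u': "u' \<in> Mor L" using assms(2) by (simp add: composable_def)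
  obtain u1 w where uw: "composable u1 w" "deg L u1 = deg L u" "deg L w = deg L u' - deg L u" "u' = cmp L u1 w"
    using factorisation[OF u' le_fun_add_diff[OF assms(4)]] by metis
  have wv: "composable w v'" using uw assms(2) src_cmp[OF uw(1)] by (auto simp: composable_def)
  have c1: "composable u1 (cmp L w v')" using uw wv rng_cmp[OF wv] cmp_in_Mor[OF wv] by (auto simp: composable_def)
  have "cmp L u v = cmp L u1 (cmp L w v')" using assms(3) uw cmp_assoc[OF uw(1) wv] by simp
  then have "u = u1 \<and> v = cmp L w v'" using factorisation_eq[OF assms(1) c1] uw(2) by simp
  then show ?thesis using that uw wv by auto
qed

text \<open>Any common extension of \<open>u\<close> and \<open>v\<close> factors through a minimal one: cut it at degree
  \<open>d(u) \<or> d(v)\<close>.\<close>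

lemma Lmin_nonempty:
  assumes "composable u a" "composable v b" "cmp L u a = cmp L v b"
  shows "Lmin L u v \<noteq> {}"
proof -
  let ?e = "cmp L u a" and ?p = "sup (deg L u) (deg L v)"
  have deg_e: "deg L ?e = deg L u + deg L a" "deg L ?e = deg L v + deg L b"
    using deg_cmp[OF assms(1)] deg_cmp[OF assms(2)] assms(3) by simp_all
  have "deg L ?e = ?p + (deg L ?e - ?p)"
  proof (rule ext)
    fix i
    have "deg L ?e i = deg L u i + deg L a i" "deg L ?e i = deg L v i + deg L b i"
      using deg_e by (auto simp: fun_eq_iff)
    then show "deg L ?e i = (?p + (deg L ?e - ?p)) i" by (simp add: sup_fun_def sup_nat_def)
  qed
  then obtain e1 e2 where e: "composable e1 e2" "deg L e1 = ?p" "?e = cmp L e1 e2"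
    using factorisation[OF cmp_in_Mor[OF assms(1)]] by metis
  obtain w where w: "composable u w" "e1 = cmp L u w"
    using factorisation_refine[OF assms(1) e(1)] e by (metis sup_ge1)
  obtain w' where w': "composable v w'" "e1 = cmp L v w'"
    using factorisation_refine[OF assms(2) e(1)] e assms(3) by (metis sup_ge2)
  have "(w, w') \<in> Lmin L u v" using w w' e unfolding Lmin_def composable_def by auto
  then show ?thesis by auto
qed

lemma Lmin_D:
  assumes "(a, b) \<in> Lmin L m n"
  shows "a \<in> Mor L" "b \<in> Mor L" "src L m = rng L a" "src L n = rng L b" "cmp L m a = cmp L n b"
    "deg L (cmp L m a) = sup (deg L m) (deg L n)"
  using assms unfolding Lmin_def mem_Collect_eq prod.case by blast+

text \<open>\<open>starts_with x \<mu>\<close> is \<open>x \<in> Z(\<mu>)\<close> in the paper's notation.\<close>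

definition starts_with :: "'a path \<Rightarrow> 'a \<Rightarrow> bool" where
  "starts_with x \<mu> \<longleftrightarrow> (\<lambda>i. enat (deg L \<mu> i)) \<le> fst x \<and> snd x (0, deg L \<mu>) = \<mu>"

lemma DF_iff: "x \<in> DF k L F \<longleftrightarrow> x \<in> XL k L \<and> (\<exists>(l, m)\<in>F. starts_with x m)"
  unfolding DF_def starts_with_def by simp

lemma XL_D:
  assumes "x \<in> XL k L"
  shows "\<forall>i\<ge>k. fst x i = 0"
    "\<And>p q. omega_mor k (fst x) p q \<Longrightarrow>
        snd x (p, q) \<in> Mor L \<and> deg L (snd x (p, q)) = q - p \<and>
        rng L (snd x (p, q)) = snd x (p, p) \<and> src L (snd x (p, q)) = snd x (q, q)"
    "\<And>p q t. omega_mor k (fst x) p q \<Longrightarrow> omega_mor k (fst x) q t \<Longrightarrow>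
        cmp L (snd x (p, q)) (snd x (q, t)) = snd x (p, t)"
    "\<And>p q. \<not> omega_mor k (fst x) p q \<Longrightarrow> snd x (p, q) = undefined"
  using assms unfolding XL_def is_path_def by simp_all

lemma
  assumes "x \<in> XL k L" "p \<in> omega_obj k (fst x)" "q \<in> omega_obj k (fst x)" "p \<le> q"
  shows path_in_Mor: "snd x (p, q) \<in> Mor L" and deg_path: "deg L (snd x (p, q)) = q - p"
    and rng_path: "rng L (snd x (p, q)) = snd x (p, p)" and src_path: "src L (snd x (p, q)) = snd x (q, q)"
  using XL_D(2)[OF assms(1)] assms(2-4) unfolding omega_mor_def by simp_all

lemma
  assumes "x \<in> XL k L" "p \<in> omega_obj k (fst x)" "q \<in> omega_obj k (fst x)" "t \<in> omega_obj k (fst x)"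
    "p \<le> q" "q \<le> t"
  shows composable_path: "composable (snd x (p, q)) (snd x (q, t))"
    and cmp_path: "cmp L (snd x (p, q)) (snd x (q, t)) = snd x (p, t)"
proof -
  show "composable (snd x (p, q)) (snd x (q, t))"
    using path_in_Mor[OF assms(1,2,3,5)] src_path[OF assms(1,2,3,5)]
      path_in_Mor[OF assms(1,3,4,6)] rng_path[OF assms(1,3,4,6)]
    unfolding composable_def by simp
  have "omega_mor k (fst x) p q" "omega_mor k (fst x) q t" using assms(2-6) unfolding omega_mor_def by simp_all
  then show "cmp L (snd x (p, q)) (snd x (q, t)) = snd x (p, t)" using XL_D(3)[OF assms(1)] by blast
qed

lemma deg_in_omega_obj: "\<mu> \<in> Mor L \<Longrightarrow> starts_with x \<mu> \<Longrightarrow> deg L \<mu> \<in> omega_obj k (fst x)"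
  unfolding starts_with_def omega_obj_def le_fun_def using deg_beyond_k by auto

lemma
  assumes "x \<in> XL k L" "\<mu> \<in> Mor L" "starts_with x \<mu>" "n \<in> omega_obj k (fst x)" "deg L \<mu> \<le> n"
  shows composable_path_tail: "composable \<mu> (snd x (deg L \<mu>, n))"
    and cmp_path_tail: "cmp L \<mu> (snd x (deg L \<mu>, n)) = snd x (0, n)"
  using composable_path[OF assms(1) zero_in_omega_obj deg_in_omega_obj[OF assms(2,3)] assms(4) _ assms(5)]
    cmp_path[OF assms(1) zero_in_omega_obj deg_in_omega_obj[OF assms(2,3)] assms(4) _ assms(5)] assms(3)
  unfolding starts_with_def by auto

lemma
  assumes "x \<in> XL k L" "n \<in> omega_obj k (fst x)"
  shows starts_with_path_init: "starts_with x (snd x (0, n))"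
    and path_init_in_Mor: "snd x (0, n) \<in> Mor L"
    and deg_path_init: "deg L (snd x (0, n)) = n"
proof -
  show d: "deg L (snd x (0, n)) = n" using deg_path[OF assms(1) zero_in_omega_obj assms(2)] by simp
  show "snd x (0, n) \<in> Mor L" using path_in_Mor[OF assms(1) zero_in_omega_obj assms(2)] by simp
  show "starts_with x (snd x (0, n))"
    unfolding starts_with_def d using assms(2) unfolding omega_obj_def le_fun_def by auto
qed

lemma starts_with_prefix:
  assumes "x \<in> XL k L" "composable a b" "starts_with x (cmp L a b)"
  shows "starts_with x a"
proof -
  have ab: "cmp L a b \<in> Mor L" using cmp_in_Mor[OF assms(2)] .
  have dab: "deg L (cmp L a b) \<in> omega_obj k (fst x)" by (rule deg_in_omega_obj[OF ab assms(3)])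
  have le: "deg L a \<le> deg L (cmp L a b)" using deg_cmp[OF assms(2)] by (simp add: le_fun_def)
  have da: "deg L a \<in> omega_obj k (fst x)" using omega_obj_downward_closed[OF dab le] .
  have "cmp L (snd x (0, deg L a)) (snd x (deg L a, deg L (cmp L a b))) = cmp L a b"
    using cmp_path[OF assms(1) zero_in_omega_obj da dab _ le] assms(3) unfolding starts_with_def by simp
  moreover have "deg L (snd x (0, deg L a)) = deg L a" using deg_path_init[OF assms(1) da] .
  ultimately have "snd x (0, deg L a) = a"
    using factorisation_eq[OF composable_path[OF assms(1) zero_in_omega_obj da dab _ le] assms(2)] by simp
  then show ?thesis unfolding starts_with_def using da unfolding omega_obj_def le_fun_def by auto
qed

lemma
  assumes "x \<in> XL k L" "m \<in> Mor L" "m' \<in> Mor L" "starts_with x m" "starts_with x m'"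
  defines "n \<equiv> sup (deg L m) (deg L m')"
  shows Lmin_path: "(snd x (deg L m, n), snd x (deg L m', n)) \<in> Lmin L m m'"
    and cmp_path_join: "cmp L m (snd x (deg L m, n)) = snd x (0, n)"
    and cmp_path_join': "cmp L m' (snd x (deg L m', n)) = snd x (0, n)"
proof -
  have n: "n \<in> omega_obj k (fst x)" unfolding n_def using omega_obj_sup deg_in_omega_obj assms by blast
  note tail = composable_path_tail[OF assms(1,2,4) n] cmp_path_tail[OF assms(1,2,4) n]
  note tail' = composable_path_tail[OF assms(1,3,5) n] cmp_path_tail[OF assms(1,3,5) n]
  show "cmp L m (snd x (deg L m, n)) = snd x (0, n)" "cmp L m' (snd x (deg L m', n)) = snd x (0, n)"
    using tail tail' unfolding n_def by auto
  then show "(snd x (deg L m, n), snd x (deg L m', n)) \<in> Lmin L m m'"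
    using tail tail' deg_path_init[OF assms(1) n] unfolding Lmin_def composable_def n_def by auto
qed

lemma SL_finite: "F \<in> SL L \<Longrightarrow> finite F"
  unfolding SL_def by simp

lemma SL_memD: "F \<in> SL L \<Longrightarrow> (l, m) \<in> F \<Longrightarrow> l \<in> Mor L \<and> m \<in> Mor L \<and> src L l = src L m"
  unfolding SL_def by blast

lemma SL_Lmin_empty:
  assumes "F \<in> SL L" "(l, m) \<in> F" "(n, w) \<in> F" "(l, m) \<noteq> (n, w)"
  shows "Lmin L l n = {} \<and> Lmin L m w = {}"
  using assms unfolding SL_def by fast

lemma SL_singleton: "a \<in> Mor L \<Longrightarrow> b \<in> Mor L \<Longrightarrow> src L a = src L b \<Longrightarrow> {(a, b)} \<in> SL L"
  unfolding SL_def by simp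

lemma SL_starts_with_unique:
  assumes "F \<in> SL L" "(l, m) \<in> F" "(l', m') \<in> F" "x \<in> XL k L" "starts_with x m" "starts_with x m'"
  shows "l = l' \<and> m = m'"
proof (rule ccontr)
  assume "\<not> (l = l' \<and> m = m')"
  then have "Lmin L m m' = {}" using SL_Lmin_empty[OF assms(1,2,3)] by auto
  moreover have "m \<in> Mor L" "m' \<in> Mor L" using SL_memD[OF assms(1)] assms(2,3) by auto
  ultimately show False using Lmin_path[OF assms(4) _ _ assms(5,6)] by auto
qed

end

section \<open>The inverse semigroup and germs\<close>

context k_graph
begin

lemma deg_zero_eq_src: "composable l a \<Longrightarrow> deg L a = 0 \<Longrightarrow> a = src L l"
  using deg_zero_vertex(1) unfolding composable_def by metis

lemma cmp_eq_self_imp_src: "composable l a \<Longrightarrow> cmp L l a = l \<Longrightarrow> a = src L l"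
  using deg_cmp deg_zero_eq_src by (metis add_cancel_left_right)

lemma Lmin_extension_nonempty: "composable u a \<Longrightarrow> Lmin L u (cmp L u a) \<noteq> {}"
  using Lmin_nonempty composable_src_id cmp_src_id cmp_in_Mor by metis

lemma smult_iff:
  "z \<in> smult L F G \<longleftrightarrow> (\<exists>l m \<xi> \<eta> a b. (l, m) \<in> F \<and> (\<xi>, \<eta>) \<in> G \<and> (a, b) \<in> Lmin L m \<xi> \<and>
      z = (cmp L l a, cmp L \<eta> b))"
  unfolding smult_def by blast

text \<open>In an element of \<open>S\<^sub>\<Lambda>\<close> no first (second) component extends another one, so
  \<open>P P = P\<close> forces every pair of \<open>P\<close> onto the diagonal.\<close>

lemma ESL_diagonal:
  assumes "P \<in> ESL L" "(p, q) \<in> P"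
  shows "p = q"
proof -
  have P: "P \<in> SL L" and PP: "smult L P P = P" using assms(1) unfolding ESL_def by simp_all
  have "(p, q) \<in> smult L P P" using PP assms(2) by simp
  then obtain p1 q1 p2 q2 a b where w: "(p1, q1) \<in> P" "(p2, q2) \<in> P" "(a, b) \<in> Lmin L q1 p2"
    "p = cmp L p1 a" "q = cmp L q2 b"
    unfolding smult_iff by blast
  note ab = Lmin_D[OF w(3)]
  have pq: "p \<in> Mor L" "q \<in> Mor L" "src L p = src L q" using SL_memD[OF P assms(2)] by simp_all
  have c1: "composable p1 a" and c2: "composable q2 b"
    using SL_memD[OF P w(1)] SL_memD[OF P w(2)] ab unfolding composable_def by simp_all
  have "Lmin L p1 p \<noteq> {}" using Lmin_extension_nonempty[OF c1] w(4) by simp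
  then have e1: "(p1, q1) = (p, q)" using SL_Lmin_empty[OF P w(1) assms(2)] by blast
  have "Lmin L q2 q \<noteq> {}" using Lmin_extension_nonempty[OF c2] w(5) by simp
  then have e2: "(p2, q2) = (p, q)" using SL_Lmin_empty[OF P w(2) assms(2)] by blast
  have "a = src L p" "b = src L q" using cmp_eq_self_imp_src c1 c2 w(4,5) e1 e2 by auto
  then have "cmp L q (src L q) = cmp L p (src L p)" using ab(5) e1 e2 pq(3) by simp
  then show "p = q" using cmp_src_id[OF pq(1)] cmp_src_id[OF pq(2)] by simp
qed

lemma composable_label_path:
  assumes F: "F \<in> SL L" and lm: "(l, m) \<in> F" and x: "x \<in> XL k L" and Z: "starts_with x m"
    and n: "n \<in> omega_obj k (fst x)" and le: "deg L m \<le> n"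
  shows "composable l (snd x (deg L m, n))"
proof -
  have lm': "l \<in> Mor L" "m \<in> Mor L" "src L l = src L m" using SL_memD[OF F lm] by simp_all
  have dm: "deg L m \<in> omega_obj k (fst x)" by (rule deg_in_omega_obj[OF lm'(2) Z])
  have "src L m = snd x (deg L m, deg L m)"
    using src_path[OF x zero_in_omega_obj dm] Z unfolding starts_with_def by simp
  also have "\<dots> = rng L (snd x (deg L m, n))" using rng_path[OF x dm n le] by simp
  finally show ?thesis using lm' path_in_Mor[OF x dm n le] unfolding composable_def by simp
qed

lemma smult_path_idempotent:
  assumes F: "F \<in> SL L" and lm: "(l, m) \<in> F" and x: "x \<in> XL k L" and Z: "starts_with x m"
    and n: "n \<in> omega_obj k (fst x)" and le: "deg L m \<le> n"
  shows "smult L F {(snd x (0, n), snd x (0, n))} = {(cmp L l (snd x (deg L m, n)), snd x (0, n))}"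
proof -
  let ?\<mu> = "snd x (0, n)" and ?e = "snd x (deg L m, n)"
  have m: "m \<in> Mor L" using SL_memD[OF F lm] by simp
  note tail = composable_path_tail[OF x m Z n le] cmp_path_tail[OF x m Z n le]
  have \<mu>: "?\<mu> \<in> Mor L" "deg L ?\<mu> = n" using path_init_in_Mor[OF x n] deg_path_init[OF x n] by simp_all
  have sub: "z = (cmp L l ?e, ?\<mu>)" if z: "z \<in> smult L F {(?\<mu>, ?\<mu>)}" for z
  proof -
    obtain l2 m2 a b where w: "(l2, m2) \<in> F" "(a, b) \<in> Lmin L m2 ?\<mu>" "z = (cmp L l2 a, cmp L ?\<mu> b)"
      using z unfolding smult_iff by blast
    note ab = Lmin_D[OF w(2)]
    have c1: "composable m2 a" using SL_memD[OF F w(1)] ab(1,3) unfolding composable_def by simp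
    have c2: "composable ?\<mu> b" using \<mu>(1) ab(2,4) unfolding composable_def by simp
    have ce: "composable ?e b" using c2 src_cmp[OF tail(1)] tail unfolding composable_def by simp
    have "cmp L m2 a = cmp L (cmp L m ?e) b" using ab(5) tail(2) by simp
    also have "\<dots> = cmp L m (cmp L ?e b)" by (rule cmp_assoc[OF tail(1) ce])
    finally have eqc: "cmp L m2 a = cmp L m (cmp L ?e b)" .
    have "composable m (cmp L ?e b)"
      using tail(1) cmp_in_Mor[OF ce] rng_cmp[OF ce] unfolding composable_def by simp
    then have "Lmin L m2 m \<noteq> {}" using Lmin_nonempty[OF c1 _ eqc] by blast
    then have eq: "(l2, m2) = (l, m)" using SL_Lmin_empty[OF F w(1) lm] by blast
    have "deg L ?\<mu> + deg L b = deg L ?\<mu>"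
      using ab(5,6) eq \<mu>(2) deg_cmp[OF c2] le by (simp add: sup_absorb2)
    then have "b = src L ?\<mu>" using deg_zero_eq_src[OF c2] by simp
    then have "cmp L ?\<mu> b = ?\<mu>" using cmp_src_id[OF \<mu>(1)] by simp
    moreover have "a = ?e"
      using cmp_left_cancel[OF _ tail(1)] c1 eq ab(5) tail(2) \<open>cmp L ?\<mu> b = ?\<mu>\<close> by simp
    ultimately show ?thesis using w(3) eq by simp
  qed
  have "(?e, src L ?\<mu>) \<in> Lmin L m ?\<mu>"
    unfolding Lmin_def using tail cmp_in_Mor[OF tail(1)] src_in_Mor[OF \<mu>(1)] rng_src[OF \<mu>(1)]
      cmp_src_id[OF \<mu>(1)] \<mu> le
    unfolding composable_def by (simp add: sup_absorb2)
  then have "(cmp L l ?e, cmp L ?\<mu> (src L ?\<mu>)) \<in> smult L F {(?\<mu>, ?\<mu>)}"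
    unfolding smult_iff using lm by blast
  then have "(cmp L l ?e, ?\<mu>) \<in> smult L F {(?\<mu>, ?\<mu>)}" using cmp_src_id[OF \<mu>(1)] by simp
  then show ?thesis using sub by blast
qed

lemma path_idempotent_ESL:
  assumes x: "x \<in> XL k L" and n: "n \<in> omega_obj k (fst x)"
  shows "{(snd x (0, n), snd x (0, n))} \<in> ESL L"
proof -
  let ?\<mu> = "snd x (0, n)"
  have \<mu>: "?\<mu> \<in> Mor L" "deg L ?\<mu> = n" "starts_with x ?\<mu>"
    using path_init_in_Mor[OF x n] deg_path_init[OF x n] starts_with_path_init[OF x n] by simp_all
  have S: "{(?\<mu>, ?\<mu>)} \<in> SL L" using SL_singleton[OF \<mu>(1) \<mu>(1)] by simp
  have "smult L {(?\<mu>, ?\<mu>)} {(?\<mu>, ?\<mu>)} = {(cmp L ?\<mu> (snd x (deg L ?\<mu>, n)), ?\<mu>)}"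
    by (rule smult_path_idempotent[OF S _ x \<mu>(3) n]) (simp_all add: \<mu>(2))
  also have "snd x (deg L ?\<mu>, n) = src L ?\<mu>" using src_path[OF x zero_in_omega_obj n] \<mu>(2) by simp
  also have "cmp L ?\<mu> (src L ?\<mu>) = ?\<mu>" using cmp_src_id[OF \<mu>(1)] .
  finally have "smult L {(?\<mu>, ?\<mu>)} {(?\<mu>, ?\<mu>)} = {(?\<mu>, ?\<mu>)}" .
  then show ?thesis using S unfolding ESL_def by simp
qed

text \<open>Germ equivalence without idempotents: \<open>\<theta>\<^sub>F\<close> and \<open>\<theta>\<^sub>G\<close> coincide on the cylinder
  \<open>Z(x(0,n))\<close> for some \<open>n\<close>.\<close>

definition germ_agree :: "('a \<times> 'a) set \<Rightarrow> ('a \<times> 'a) set \<Rightarrow> 'a path \<Rightarrow> bool" where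
  "germ_agree F G x \<longleftrightarrow> (\<exists>l m l' m' n. (l, m) \<in> F \<and> (l', m') \<in> G \<and> starts_with x m \<and> starts_with x m' \<and>
     n \<in> omega_obj k (fst x) \<and> deg L m \<le> n \<and> deg L m' \<le> n \<and>
     cmp L l (snd x (deg L m, n)) = cmp L l' (snd x (deg L m', n)))"

lemma cmp_label_path_extend:
  assumes F: "F \<in> SL L" and lm: "(l, m) \<in> F" and x: "x \<in> XL k L" and Z: "starts_with x m"
    and n: "n \<in> omega_obj k (fst x)" and le: "deg L m \<le> n"
    and n': "n' \<in> omega_obj k (fst x)" and le': "n \<le> n'"
  shows "cmp L l (snd x (deg L m, n')) = cmp L (cmp L l (snd x (deg L m, n))) (snd x (n, n'))"
proof -
  have dm: "deg L m \<in> omega_obj k (fst x)" using SL_memD[OF F lm] deg_in_omega_obj Z by blast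
  show ?thesis
    using cmp_assoc[OF composable_label_path[OF assms(1-6)] composable_path[OF x dm n n' le le']]
      cmp_path[OF x dm n n' le le'] by simp
qed

lemma germ_agree_sym: "germ_agree F G x \<Longrightarrow> germ_agree G F x"
  unfolding germ_agree_def by metis

lemma germ_agree_refl:
  assumes F: "F \<in> SL L" and x: "x \<in> DF k L F"
  shows "germ_agree F F x"
proof -
  obtain l m where lm: "(l, m) \<in> F" "starts_with x m" using x unfolding DF_iff by blast
  have m: "m \<in> Mor L" using SL_memD[OF F lm(1)] by simp
  show ?thesis unfolding germ_agree_def using lm deg_in_omega_obj[OF m lm(2)] by blast
qed

lemma germ_agree_trans:
  assumes F: "F \<in> SL L" and G: "G \<in> SL L" and H: "H \<in> SL L" and x: "x \<in> XL k L"
    and FG: "germ_agree F G x" and GH: "germ_agree G H x"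
  shows "germ_agree F H x"
proof -
  obtain l m l' m' n where A: "(l, m) \<in> F" "(l', m') \<in> G" "starts_with x m" "starts_with x m'"
     "n \<in> omega_obj k (fst x)" "deg L m \<le> n" "deg L m' \<le> n"
     "cmp L l (snd x (deg L m, n)) = cmp L l' (snd x (deg L m', n))"
    using FG unfolding germ_agree_def by blast
  obtain l2 m2 l3 m3 n2 where B: "(l2, m2) \<in> G" "(l3, m3) \<in> H" "starts_with x m2" "starts_with x m3"
     "n2 \<in> omega_obj k (fst x)" "deg L m2 \<le> n2" "deg L m3 \<le> n2"
     "cmp L l2 (snd x (deg L m2, n2)) = cmp L l3 (snd x (deg L m3, n2))"
    using GH unfolding germ_agree_def by blast
  have e: "l2 = l' \<and> m2 = m'" using SL_starts_with_unique[OF G B(1) A(2) x B(3) A(4)] .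
  let ?N = "sup n n2"
  have N: "?N \<in> omega_obj k (fst x)" using omega_obj_sup A(5) B(5) by blast
  have "cmp L l (snd x (deg L m, ?N)) = cmp L (cmp L l (snd x (deg L m, n))) (snd x (n, ?N))"
    using cmp_label_path_extend[OF F A(1) x A(3) A(5) A(6) N] by simp
  also have "\<dots> = cmp L (cmp L l' (snd x (deg L m', n))) (snd x (n, ?N))" using A(8) by simp
  also have "\<dots> = cmp L l' (snd x (deg L m', ?N))"
    using cmp_label_path_extend[OF G A(2) x A(4) A(5) A(7) N] by simp
  also have "\<dots> = cmp L (cmp L l2 (snd x (deg L m2, n2))) (snd x (n2, ?N))"
    using cmp_label_path_extend[OF G B(1) x B(3) B(5) B(6) N] e by simp
  also have "\<dots> = cmp L (cmp L l3 (snd x (deg L m3, n2))) (snd x (n2, ?N))" using B(8) by simp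
  also have "\<dots> = cmp L l3 (snd x (deg L m3, ?N))"
    using cmp_label_path_extend[OF H B(2) x B(4) B(5) B(7) N] by simp
  finally show ?thesis unfolding germ_agree_def using A(1,3,6) B(2,4,7) N
    by (meson order_trans sup_ge1 sup_ge2)
qed

lemma germ_agree_imp_idempotent:
  assumes F: "F \<in> SL L" and G: "G \<in> SL L" and x: "x \<in> XL k L" and FG: "germ_agree F G x"
  shows "\<exists>P\<in>ESL L. x \<in> DF k L P \<and> smult L F P = smult L G P"
proof -
  obtain l m l' m' n where A: "(l, m) \<in> F" "(l', m') \<in> G" "starts_with x m" "starts_with x m'"
     "n \<in> omega_obj k (fst x)" "deg L m \<le> n" "deg L m' \<le> n"
     "cmp L l (snd x (deg L m, n)) = cmp L l' (snd x (deg L m', n))"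
    using FG unfolding germ_agree_def by blast
  let ?P = "{(snd x (0, n), snd x (0, n))}"
  have "x \<in> DF k L ?P" unfolding DF_iff using x starts_with_path_init[OF x A(5)] by simp
  moreover have "smult L F ?P = smult L G ?P"
    using smult_path_idempotent[OF F A(1) x A(3) A(5) A(6)]
      smult_path_idempotent[OF G A(2) x A(4) A(5) A(7)] A(8) by simp
  ultimately show ?thesis using path_idempotent_ESL[OF x A(5)] by blast
qed

lemma idempotent_imp_germ_agree:
  assumes F: "F \<in> SL L" and G: "G \<in> SL L" and x: "x \<in> DF k L F" and P: "P \<in> ESL L"
    and xP: "x \<in> DF k L P" and eq: "smult L F P = smult L G P"
  shows "germ_agree F G x"
proof -
  have xX: "x \<in> XL k L" using x unfolding DF_iff by simp
  obtain q where q: "(q, q) \<in> P" "starts_with x q"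
    using xP ESL_diagonal[OF P] unfolding DF_iff by fast
  have qM: "q \<in> Mor L" using SL_memD[OF _ q(1)] P unfolding ESL_def by blast
  obtain l0 m0 where lm0: "(l0, m0) \<in> F" "starts_with x m0" using x unfolding DF_iff by blast
  have m0: "m0 \<in> Mor L" using SL_memD[OF F lm0(1)] by simp
  define n where "n = sup (deg L m0) (deg L q)"
  note join = Lmin_path[OF xX m0 qM lm0(2) q(2), folded n_def]
    cmp_path_join'[OF xX m0 qM lm0(2) q(2), folded n_def]
  have n: "n \<in> omega_obj k (fst x)"
    unfolding n_def using omega_obj_sup deg_in_omega_obj m0 qM lm0(2) q(2) by blast
  have "(cmp L l0 (snd x (deg L m0, n)), cmp L q (snd x (deg L q, n))) \<in> smult L G P"
    unfolding eq[symmetric] smult_iff using lm0(1) q(1) join(1) by blast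
  then obtain l' m' \<eta> a' b' where w: "(l', m') \<in> G" "(\<eta>, \<eta>) \<in> P" "(a', b') \<in> Lmin L m' \<eta>"
    "cmp L l0 (snd x (deg L m0, n)) = cmp L l' a'" "cmp L q (snd x (deg L q, n)) = cmp L \<eta> b'"
    unfolding smult_iff using ESL_diagonal[OF P] by blast
  note ab = Lmin_D[OF w(3)]
  have c': "composable m' a'" using SL_memD[OF G w(1)] ab(1,3) unfolding composable_def by simp
  have m'a': "cmp L m' a' = snd x (0, n)" using ab(5) w(5) join(2) by simp
  then have "starts_with x (cmp L m' a')" using starts_with_path_init[OF xX n] by simp
  then have Zm': "starts_with x m'" by (rule starts_with_prefix[OF xX c'])
  have "deg L m' \<le> deg L m' + deg L a'" by (simp add: le_fun_def)
  then have le': "deg L m' \<le> n" using deg_cmp[OF c'] deg_path_init[OF xX n] m'a' by simp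
  have m'M: "m' \<in> Mor L" using c' unfolding composable_def by simp
  have "a' = snd x (deg L m', n)"
    using cmp_left_cancel[OF c' composable_path_tail[OF xX m'M Zm' n le']]
      cmp_path_tail[OF xX m'M Zm' n le'] m'a' by simp
  then show ?thesis unfolding germ_agree_def using lm0 w(1) Zm' n le' w(4)
    by (metis n_def sup_ge1)
qed

lemma germ_rel_iff_agree:
  "germ_rel k L (F, x) (G, y) \<longleftrightarrow>
     F \<in> SL L \<and> G \<in> SL L \<and> x \<in> DF k L F \<and> y \<in> DF k L G \<and> x = y \<and> germ_agree F G x"
  unfolding germ_rel_def prod.case
  using germ_agree_imp_idempotent idempotent_imp_germ_agree DF_iff by blast

lemma germ_self: "F \<in> SL L \<Longrightarrow> x \<in> DF k L F \<Longrightarrow> (F, x) \<in> germ k L F x"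
  unfolding germ_def mem_Collect_eq germ_rel_iff_agree using germ_agree_refl by blast

lemma germ_eq_iff:
  assumes F: "F \<in> SL L" "x \<in> DF k L F" and G: "G \<in> SL L" "y \<in> DF k L G"
  shows "germ k L F x = germ k L G y \<longleftrightarrow> x = y \<and> germ_agree F G x"
proof
  assume "germ k L F x = germ k L G y"
  then have "(G, y) \<in> germ k L F x" using germ_self[OF G] by simp
  then show "x = y \<and> germ_agree F G x" unfolding germ_def mem_Collect_eq germ_rel_iff_agree by blast
next
  assume A: "x = y \<and> germ_agree F G x"
  have xX: "x \<in> XL k L" using F(2) unfolding DF_iff by simp
  show "germ k L F x = germ k L G y"
  proof (rule set_eqI)
    fix Kz :: "('a \<times> 'a) set \<times> 'a path"
    obtain K z where Kz: "Kz = (K, z)" by (cases Kz)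
    show "Kz \<in> germ k L F x \<longleftrightarrow> Kz \<in> germ k L G y"
      unfolding germ_def Kz mem_Collect_eq germ_rel_iff_agree
      using A F G germ_agree_trans[OF _ _ _ xX] germ_agree_sym by metis
  qed
qed

lemma path_eqI:
  assumes x: "x \<in> XL k L" and y: "y \<in> XL k L"
    and same: "\<And>\<mu>. \<mu> \<in> Mor L \<Longrightarrow> starts_with x \<mu> \<longleftrightarrow> starts_with y \<mu>"
  shows "x = y"
proof -
  have init: "n \<in> omega_obj k (fst x') \<and> snd x' (0, n) = snd x'' (0, n)"
    if "x' \<in> XL k L" "x'' \<in> XL k L" "\<And>\<mu>. \<mu> \<in> Mor L \<Longrightarrow> starts_with x'' \<mu> \<Longrightarrow> starts_with x' \<mu>"
       "n \<in> omega_obj k (fst x'')" for x' x'' n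
  proof -
    have "starts_with x' (snd x'' (0, n))"
      using that starts_with_path_init path_init_in_Mor by blast
    then show ?thesis
      using deg_in_omega_obj path_init_in_Mor deg_path_init that(2,4)
      unfolding starts_with_def by metis
  qed
  have "omega_obj k (fst x) \<subseteq> omega_obj k (fst y)" "omega_obj k (fst y) \<subseteq> omega_obj k (fst x)"
    using init[OF y x] init[OF x y] same by blast+
  then have f: "fst x = fst y"
    using omega_obj_subset_imp_le XL_D(1)[OF x] XL_D(1)[OF y] by (intro ext antisym) blast+
  have "snd x (p, q) = snd y (p, q)" for p q
  proof (cases "omega_mor k (fst x) p q")
    case True
    then have o: "p \<in> omega_obj k (fst x)" "q \<in> omega_obj k (fst x)" "p \<le> q"
      unfolding omega_mor_def by simp_all
    have oy: "p \<in> omega_obj k (fst y)" "q \<in> omega_obj k (fst y)" using o f by simp_all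
    note cx = composable_path[OF x zero_in_omega_obj o(1) o(2) _ o(3)] cmp_path[OF x zero_in_omega_obj o(1) o(2) _ o(3)]
    note cy = composable_path[OF y zero_in_omega_obj oy(1) oy(2) _ o(3)] cmp_path[OF y zero_in_omega_obj oy(1) oy(2) _ o(3)]
    have "snd x (0, p) = snd y (0, p)" "snd x (0, q) = snd y (0, q)"
      using init[OF y x] same o by auto
    then show ?thesis using cmp_left_cancel[OF cx(1)] cx(2) cy by simp
  next
    case False
    then show ?thesis using XL_D(4)[OF x False] XL_D(4)[OF y] f by simp
  qed
  then show ?thesis using f by (simp add: prod_eq_iff fun_eq_iff)
qed

lemma germ_in_GL: "F \<in> SL L \<Longrightarrow> x \<in> DF k L F \<Longrightarrow> germ k L F x \<in> GL k L"
  unfolding GL_def by blast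

lemma germ_in_Psi_self: "x \<in> DF k L F \<Longrightarrow> germ k L F x \<in> Psi k L F"
  unfolding Psi_def by blast

lemma Psi_eq_image: "Psi k L F = (\<lambda>x. germ k L F x) ` DF k L F"
  unfolding Psi_def by blast

lemma Psi_subset_GL: "F \<in> SL L \<Longrightarrow> Psi k L F \<subseteq> GL k L"
  unfolding Psi_def GL_def by blast

lemma germ_in_Psi_iff_agree:
  assumes F: "F \<in> SL L" "x \<in> DF k L F" and H: "H \<in> SL L"
  shows "germ k L F x \<in> Psi k L H \<longleftrightarrow> x \<in> DF k L H \<and> germ_agree F H x"
proof
  assume "germ k L F x \<in> Psi k L H"
  then obtain z where "z \<in> DF k L H" "germ k L F x = germ k L H z" unfolding Psi_def by blast
  then show "x \<in> DF k L H \<and> germ_agree F H x" using germ_eq_iff[OF F H] by blast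
next
  assume "x \<in> DF k L H \<and> germ_agree F H x"
  then show "germ k L F x \<in> Psi k L H"
    using germ_eq_iff[OF F H] germ_in_Psi_self[of x H] by metis
qed

text \<open>A path \<open>x\<close> through \<open>\<mu>\<close> is separated from a path \<open>y\<close> not through \<open>\<mu>\<close> by the
  restriction of \<open>F\<close> to the cylinder of \<open>x(0, d(\<mu>) \<or> d(m))\<close>.\<close>

lemma Psi_separates_paths:
  assumes F: "F \<in> SL L" "x \<in> DF k L F" and G: "G \<in> SL L" "y \<in> DF k L G"
    and \<mu>: "\<mu> \<in> Mor L" "starts_with x \<mu>" "\<not> starts_with y \<mu>"
  shows "\<exists>H\<in>SL L. germ k L F x \<in> Psi k L H \<and> germ k L G y \<notin> Psi k L H"
proof -
  have x: "x \<in> XL k L" using F(2) unfolding DF_iff by simp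
  have y: "y \<in> XL k L" using G(2) unfolding DF_iff by simp
  obtain l m where lm: "(l, m) \<in> F" "starts_with x m" using F(2) unfolding DF_iff by blast
  have m: "m \<in> Mor L" using SL_memD[OF F(1) lm(1)] by simp
  define n where "n = sup (deg L \<mu>) (deg L m)"
  have n: "n \<in> omega_obj k (fst x)"
    unfolding n_def using omega_obj_sup deg_in_omega_obj \<mu>(1,2) m lm(2) by blast
  let ?e = "snd x (deg L m, n)" and ?\<nu> = "snd x (0, n)"
  have c: "composable l ?e" by (rule composable_label_path[OF F(1) lm(1) x lm(2) n]) (simp add: n_def)
  have \<nu>: "?\<nu> \<in> Mor L" "deg L ?\<nu> = n" "starts_with x ?\<nu>"
    using path_init_in_Mor[OF x n] deg_path_init[OF x n] starts_with_path_init[OF x n] by simp_all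
  have dm: "deg L m \<in> omega_obj k (fst x)" by (rule deg_in_omega_obj[OF m lm(2)])
  have src_e: "src L ?e = src L ?\<nu>"
    using src_path[OF x dm n] src_path[OF x zero_in_omega_obj n] by (simp add: n_def)
  let ?H = "{(cmp L l ?e, ?\<nu>)}"
  have H: "?H \<in> SL L" using SL_singleton cmp_in_Mor[OF c] src_cmp[OF c] \<nu>(1) src_e by simp
  have xH: "x \<in> DF k L ?H" unfolding DF_iff using x \<nu>(3) by simp
  have "cmp L l ?e = cmp L (cmp L l ?e) (snd x (deg L ?\<nu>, n))"
    using \<nu>(2) src_e cmp_src_id[OF cmp_in_Mor[OF c]] src_cmp[OF c] src_path[OF x zero_in_omega_obj n]
    by simp
  then have "germ_agree F ?H x" unfolding germ_agree_def
    using lm(1) lm(2) \<nu>(2,3) n by (intro exI[of _ l] exI[of _ m] exI[of _ "cmp L l ?e"] exI[of _ ?\<nu>] exI[of _ n])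
       (simp add: n_def)
  then have in_H: "germ k L F x \<in> Psi k L ?H" using germ_in_Psi_iff_agree[OF F H] xH by blast
  have "germ k L G y \<notin> Psi k L ?H"
  proof
    assume "germ k L G y \<in> Psi k L ?H"
    then have "starts_with y ?\<nu>" using germ_in_Psi_iff_agree[OF G H] unfolding DF_iff by simp
    moreover have "deg L \<mu> \<le> n" by (simp add: n_def)
    ultimately have "starts_with y \<mu>"
      using starts_with_prefix[OF y composable_path_tail[OF x \<mu>(1,2) n]] cmp_path_tail[OF x \<mu>(1,2) n]
      by simp
    then show False using \<mu>(3) by simp
  qed
  then show ?thesis using in_H H by blast
qed

lemma GL_separated_by_Psi:
  assumes "g \<in> GL k L" "g' \<in> GL k L" "g \<noteq> g'"
  shows "\<exists>H\<in>SL L. g \<in> Psi k L H \<and> g' \<notin> Psi k L H \<or> g' \<in> Psi k L H \<and> g \<notin> Psi k L H"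
proof -
  obtain F x where F: "F \<in> SL L" "x \<in> DF k L F" and g: "g = germ k L F x"
    using assms(1) unfolding GL_def by blast
  obtain G y where G: "G \<in> SL L" "y \<in> DF k L G" and g': "g' = germ k L G y"
    using assms(2) unfolding GL_def by blast
  show ?thesis
  proof (cases "x = y")
    case True
    then have "g' \<notin> Psi k L F"
      using germ_in_Psi_iff_agree[OF G F(1)] germ_eq_iff[OF G F] assms(3) g g' by auto
    then show ?thesis using germ_in_Psi_self[OF F(2)] F(1) g by blast
  next
    case False
    then obtain \<mu> where "\<mu> \<in> Mor L" "starts_with x \<mu> \<noteq> starts_with y \<mu>"
      using path_eqI F(2) G(2) unfolding DF_iff by blast
    then show ?thesis
      using Psi_separates_paths[OF F G, of \<mu>] Psi_separates_paths[OF G F, of \<mu>] g g' by blast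
  qed
qed

text \<open>Membership of a germ of \<open>F\<close> at a path through \<open>m\<close> in \<open>\<Psi>(H)\<close> only depends on
  which of the morphisms in \<open>Psi_tests l m H\<close> the path passes through; for finitely aligned
  k-graphs there are finitely many of them.\<close>

definition Psi_tests :: "'a \<Rightarrow> 'a \<Rightarrow> ('a \<times> 'a) set \<Rightarrow> 'a set" where
  "Psi_tests l m H = {cmp L m a | a. \<exists>l' m' a'. (l', m') \<in> H \<and> (a, a') \<in> Lmin L m m' \<and> cmp L l a = cmp L l' a'}"

lemma germ_agree_imp_Psi_test:
  assumes F: "F \<in> SL L" and lm: "(l, m) \<in> F" and x: "x \<in> XL k L" and Z: "starts_with x m"
    and H: "H \<in> SL L" and FH: "germ_agree F H x"
  shows "\<exists>c\<in>Psi_tests l m H. starts_with x c"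
proof -
  have lm': "l \<in> Mor L" "m \<in> Mor L" using SL_memD[OF F lm] by simp_all
  obtain l1 m1 l' m' n where A: "(l1, m1) \<in> F" "(l', m') \<in> H" "starts_with x m1" "starts_with x m'"
     "n \<in> omega_obj k (fst x)" "deg L m1 \<le> n" "deg L m' \<le> n"
     "cmp L l1 (snd x (deg L m1, n)) = cmp L l' (snd x (deg L m', n))"
    using FH unfolding germ_agree_def by blast
  have e: "l1 = l \<and> m1 = m" using SL_starts_with_unique[OF F A(1) lm x A(3) Z] .
  have m': "m' \<in> Mor L" using SL_memD[OF H A(2)] by simp
  define j where "j = sup (deg L m) (deg L m')"
  let ?a = "snd x (deg L m, j)" and ?a' = "snd x (deg L m', j)"
  have j: "j \<in> omega_obj k (fst x)"
    unfolding j_def using omega_obj_sup deg_in_omega_obj lm'(2) m' Z A(4) by blast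
  have jn: "j \<le> n" using A(6,7) e by (simp add: j_def)
  have "cmp L (cmp L l ?a) (snd x (j, n)) = cmp L (cmp L l' ?a') (snd x (j, n))"
    using cmp_label_path_extend[OF F lm x Z j _ A(5) jn] cmp_label_path_extend[OF H A(2) x A(4) j _ A(5) jn]
      A(8) e by (simp add: j_def)
  moreover have "composable l ?a" by (rule composable_label_path[OF F lm x Z j]) (simp add: j_def)
  moreover have "composable l' ?a'" by (rule composable_label_path[OF H A(2) x A(4) j]) (simp add: j_def)
  moreover have dm: "deg L m \<in> omega_obj k (fst x)" "deg L m' \<in> omega_obj k (fst x)"
    using deg_in_omega_obj lm'(2) m' Z A(4) by blast+
  ultimately have "cmp L l ?a = cmp L l' ?a'"
    using cmp_right_cancel src_cmp cmp_in_Mor src_path[OF x dm(1) j] src_path[OF x dm(2) j]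
      rng_path[OF x j A(5) jn] path_in_Mor[OF x j A(5) jn] j_def
    unfolding composable_def by (metis sup_ge1 sup_ge2)
  moreover have "starts_with x (cmp L m ?a)"
    using cmp_path_join[OF x lm'(2) m' Z A(4)] starts_with_path_init[OF x j] by (simp add: j_def)
  ultimately show ?thesis
    using A(2) Lmin_path[OF x lm'(2) m' Z A(4)] unfolding j_def Psi_tests_def by blast
qed

lemma Psi_test_imp_germ_agree:
  assumes F: "F \<in> SL L" and lm: "(l, m) \<in> F" and x: "x \<in> XL k L" and Z: "starts_with x m"
    and H: "H \<in> SL L" and c: "c \<in> Psi_tests l m H" "starts_with x c"
  shows "x \<in> DF k L H \<and> germ_agree F H x"
proof -
  have lm': "l \<in> Mor L" "m \<in> Mor L" using SL_memD[OF F lm] by simp_all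
  obtain l' m' a a' where B: "(l', m') \<in> H" "(a, a') \<in> Lmin L m m'" "cmp L l a = cmp L l' a'"
    "starts_with x (cmp L m a)" using c unfolding Psi_tests_def by blast
  note ab = Lmin_D[OF B(2)]
  have m': "m' \<in> Mor L" using SL_memD[OF H B(1)] by simp
  have c1: "composable m a" and c2: "composable m' a'"
    using lm' m' ab(1-4) unfolding composable_def by simp_all
  have Zm': "starts_with x m'" using starts_with_prefix[OF x c2] B(4) ab(5) by simp
  let ?n = "deg L (cmp L m a)"
  have n: "?n \<in> omega_obj k (fst x)" using deg_in_omega_obj[OF cmp_in_Mor[OF c1] B(4)] .
  have le: "deg L m \<le> ?n" "deg L m' \<le> ?n" using ab(6) by simp_all
  have \<mu>: "snd x (0, ?n) = cmp L m a" using B(4) unfolding starts_with_def by simp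
  have "snd x (deg L m, ?n) = a"
    using cmp_left_cancel[OF composable_path_tail[OF x lm'(2) Z n le(1)] c1]
      cmp_path_tail[OF x lm'(2) Z n le(1)] \<mu> by simp
  moreover have "snd x (deg L m', ?n) = a'"
    using cmp_left_cancel[OF composable_path_tail[OF x m' Zm' n le(2)] c2]
      cmp_path_tail[OF x m' Zm' n le(2)] \<mu> ab(5) by simp
  ultimately have "germ_agree F H x" unfolding germ_agree_def
    using lm B(1) Z Zm' n le B(3) by (intro exI[of _ l] exI[of _ m] exI[of _ l'] exI[of _ m'] exI[of _ ?n]) simp
  then show ?thesis unfolding DF_iff using x B(1) Zm' by blast
qed

lemma germ_in_Psi_iff_tests:
  assumes F: "F \<in> SL L" and lm: "(l, m) \<in> F" and x: "x \<in> XL k L" and Z: "starts_with x m" and H: "H \<in> SL L"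
  shows "germ k L F x \<in> Psi k L H \<longleftrightarrow> (\<exists>c\<in>Psi_tests l m H. starts_with x c)"
proof -
  have "x \<in> DF k L F" unfolding DF_iff using x lm Z by blast
  then show ?thesis
    using germ_in_Psi_iff_agree[OF F _ H] germ_agree_imp_Psi_test[OF assms] Psi_test_imp_germ_agree[OF assms]
    by blast
qed

end

section \<open>Paths as sets of initial segments\<close>

context k_graph
begin

definition factors_at :: "'a \<Rightarrow> (nat \<Rightarrow> nat) \<Rightarrow> (nat \<Rightarrow> nat) \<Rightarrow> 'a \<Rightarrow> 'a \<Rightarrow> 'a \<Rightarrow> bool" where
  "factors_at l p q a b e \<longleftrightarrow> composable a b \<and> composable (cmp L a b) e \<and> l = cmp L (cmp L a b) e \<and> deg L a = p \<and> deg L b = q - p"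

definition seg :: "'a \<Rightarrow> (nat \<Rightarrow> nat) \<Rightarrow> (nat \<Rightarrow> nat) \<Rightarrow> 'a" where
  "seg l p q = (THE b. \<exists>a e. factors_at l p q a b e)"

lemma factors_at_exists:
  assumes l: "l \<in> Mor L" and pq: "p \<le> q" and ql: "q \<le> deg L l"
  shows "\<exists>a b e. factors_at l p q a b e"
proof -
  obtain u e where ue: "composable u e" "deg L u = q" "l = cmp L u e"
    using factorisation[OF l le_fun_add_diff[OF ql]] by metis
  have u: "u \<in> Mor L" using ue(1) by (simp add: composable_def)
  obtain a b where ab: "composable a b" "deg L a = p" "deg L b = q - p" "u = cmp L a b"
    using factorisation[OF u] le_fun_add_diff[OF pq] ue(2) by metis
  show ?thesis unfolding factors_at_def using ab ue by blast
qed

lemma factors_at_unique: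
  assumes "factors_at l p q a b e" "factors_at l p q a' b' e'" shows "b = b'"
proof -
  have d: "deg L (cmp L a b) = deg L (cmp L a' b')"
    using assms deg_cmp unfolding factors_at_def by metis
  have "cmp L a b = cmp L a' b'" using factorisation_eq[of "cmp L a b" e "cmp L a' b'" e'] assms d
    unfolding factors_at_def by metis
  then show ?thesis using factorisation_eq[of a b a' b'] assms unfolding factors_at_def by metis
qed

lemma seg_eqI: "factors_at l p q a b e \<Longrightarrow> seg l p q = b"
  unfolding seg_def using factors_at_unique by blast

lemma factors_at_seg:
  assumes "factors_at l p q a b e"
  shows "b \<in> Mor L" "deg L b = q - p"
  using assms unfolding factors_at_def composable_def by auto

lemma seg_in_Mor_deg:
  assumes l: "l \<in> Mor L" and pq: "p \<le> q" and ql: "q \<le> deg L l"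
  shows "seg l p q \<in> Mor L" "deg L (seg l p q) = q - p"
proof -
  obtain a b e where "factors_at l p q a b e" using factors_at_exists[OF assms] by blast
  then show "seg l p q \<in> Mor L" "deg L (seg l p q) = q - p" using seg_eqI factors_at_seg by auto
qed

lemma seg_cmp:
  assumes l: "l \<in> Mor L" and pq: "p \<le> q" and qt: "q \<le> t" and tl: "t \<le> deg L l"
  shows "composable (seg l p q) (seg l q t)" "cmp L (seg l p q) (seg l q t) = seg l p t"
proof -
  have pt: "p \<le> t" using pq qt by (rule order_trans)
  obtain a bc e where D: "factors_at l p t a bc e" using factors_at_exists[OF l pt tl] by blast
  have abc: "composable a bc" "composable (cmp L a bc) e" "l = cmp L (cmp L a bc) e" "deg L a = p" "deg L bc = t - p"
    using D unfolding factors_at_def by simp_all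
  have bcM: "bc \<in> Mor L" using abc(1) by (simp add: composable_def)
  have "t - p = (q - p) + (t - q)" using pq qt by (auto simp: fun_eq_iff le_fun_def)
  then obtain b c where bc: "composable b c" "deg L b = q - p" "deg L c = t - q" "bc = cmp L b c"
    using factorisation[OF bcM] abc(5) by metis
  have ab: "composable a b" using abc(1) bc(1,4) rng_cmp[OF bc(1)] unfolding composable_def by simp
  have abc2: "composable (cmp L a b) c" using ab bc(1) cmp_in_Mor[OF ab] src_cmp[OF ab] unfolding composable_def by simp
  have assoc1: "cmp L a bc = cmp L (cmp L a b) c" using cmp_assoc[OF ab bc(1)] bc(4) by simp
  have ce: "composable c e" using abc(2) assoc1 src_cmp[OF abc2] bc(1) unfolding composable_def by simp
  have l2: "l = cmp L (cmp L a b) (cmp L c e)" using abc(3) assoc1 cmp_assoc[OF abc2 ce] by simp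
  have abce: "composable (cmp L a b) (cmp L c e)" using abc2 ce cmp_in_Mor[OF ce] rng_cmp[OF ce] unfolding composable_def by simp
  have "factors_at l p q a b (cmp L c e)" unfolding factors_at_def using ab abce l2 abc(4) bc(2) by simp
  then have s1: "seg l p q = b" by (rule seg_eqI)
  have dab: "deg L (cmp L a b) = q" using deg_cmp[OF ab] abc(4) bc(2) pq
    by (auto simp: fun_eq_iff le_fun_def)
  have "factors_at l q t (cmp L a b) c e" unfolding factors_at_def
    using abc2 abc(2) assoc1 abc(3) dab bc(3) by simp
  then have s2: "seg l q t = c" by (rule seg_eqI)
  have s3: "seg l p t = bc" using seg_eqI[OF D] .
  show "composable (seg l p q) (seg l q t)" using s1 s2 bc(1) by simp
  show "cmp L (seg l p q) (seg l q t) = seg l p t" using s1 s2 s3 bc(4) by simp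
qed

lemma seg_vertex:
  assumes l: "l \<in> Mor L" and ql: "q \<le> deg L l"
  shows "rng L (seg l q q) = seg l q q" "src L (seg l q q) = seg l q q"
proof -
  have "seg l q q \<in> Mor L" "deg L (seg l q q) = 0" using seg_in_Mor_deg[OF l order_refl ql] by simp_all
  then show "rng L (seg l q q) = seg l q q" "src L (seg l q q) = seg l q q" using deg_zero_vertex by auto
qed

lemma seg_rng_src:
  assumes l: "l \<in> Mor L" and pq: "p \<le> q" and ql: "q \<le> deg L l"
  shows "rng L (seg l p q) = seg l p p" "src L (seg l p q) = seg l q q"
proof -
  have pl: "p \<le> deg L l" using pq ql by (rule order_trans)
  have "composable (seg l p p) (seg l p q)" using seg_cmp[OF l order_refl pq ql] by simp
  then show "rng L (seg l p q) = seg l p p" using seg_vertex[OF l pl] unfolding composable_def by simp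
  have "composable (seg l p q) (seg l q q)" using seg_cmp[OF l pq order_refl ql] by simp
  then show "src L (seg l p q) = seg l q q" using seg_vertex[OF l ql] unfolding composable_def by simp
qed

lemma seg_cmp_extend:
  assumes c: "composable l a'" and pq: "p \<le> q" and ql: "q \<le> deg L l"
  shows "seg (cmp L l a') p q = seg l p q"
proof -
  have l: "l \<in> Mor L" using c by (simp add: composable_def)
  obtain a b e where D: "factors_at l p q a b e" using factors_at_exists[OF l pq ql] by blast
  have d: "composable a b" "composable (cmp L a b) e" "l = cmp L (cmp L a b) e" "deg L a = p" "deg L b = q - p"
    using D unfolding factors_at_def by simp_all
  have ea: "composable e a'" using c d(2,3) src_cmp[OF d(2)] unfolding composable_def by simp
  have "composable (cmp L a b) (cmp L e a')" using d(2) ea cmp_in_Mor[OF ea] rng_cmp[OF ea] unfolding composable_def by simp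
  moreover have "cmp L l a' = cmp L (cmp L a b) (cmp L e a')" using d(3) cmp_assoc[OF d(2) ea] by simp
  ultimately have "factors_at (cmp L l a') p q a b (cmp L e a')" unfolding factors_at_def using d by simp
  then show ?thesis using seg_eqI D by simp
qed

lemma seg_full:
  assumes l: "l \<in> Mor L" shows "seg l 0 (deg L l) = l"
proof -
  have "composable (rng L l) l" "composable (cmp L (rng L l) l) (src L l)"
    using composable_rng_id[OF l] composable_src_id[OF l] cmp_rng_id[OF l] by simp_all
  moreover have "l = cmp L (cmp L (rng L l) l) (src L l)" using cmp_rng_id[OF l] cmp_src_id[OF l] by simp
  ultimately have "factors_at l 0 (deg L l) (rng L l) l (src L l)" unfolding factors_at_def using deg_rng[OF l] deg_src[OF l] by simp
  then show ?thesis by (rule seg_eqI)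
qed

lemma seg_prefix:
  assumes l: "l \<in> Mor L" and nl: "n \<le> deg L l"
  shows "composable (seg l 0 n) (seg l n (deg L l))" "cmp L (seg l 0 n) (seg l n (deg L l)) = l"
  using seg_cmp[OF l _ nl order_refl] seg_full[OF l] by (simp_all add: le_fun_def)

text \<open>The sets of initial segments of the paths in \<open>Z(m)\<close> are exactly the predicates \<open>S\<close>
  with \<open>directed_hereditary m S\<close>; \<open>path_of\<close> recovers the path, its degree being the supremum of the
  degrees in \<open>S\<close>.\<close>

definition directed_hereditary :: "'a \<Rightarrow> ('a \<Rightarrow> bool) \<Rightarrow> bool" where
  "directed_hereditary m S \<longleftrightarrow> S m \<and> (\<forall>a. S a \<longrightarrow> a \<in> Mor L) \<and> (\<forall>a b. composable a b \<longrightarrow> S (cmp L a b) \<longrightarrow> S a) \<and>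
     (\<forall>a b. a \<in> Mor L \<longrightarrow> b \<in> Mor L \<longrightarrow> S a \<longrightarrow> S b \<longrightarrow> (\<exists>\<alpha> \<beta>. (\<alpha>, \<beta>) \<in> Lmin L a b \<and> S (cmp L a \<alpha>)))"

definition path_deg :: "('a \<Rightarrow> bool) \<Rightarrow> nat \<Rightarrow> enat" where
  "path_deg S = (\<lambda>i. SUP \<mu>\<in>Collect S. enat (deg L \<mu> i))"

definition cover :: "('a \<Rightarrow> bool) \<Rightarrow> (nat \<Rightarrow> nat) \<Rightarrow> 'a" where
  "cover S q = (SOME \<mu>. S \<mu> \<and> q \<le> deg L \<mu>)"

definition path_of :: "('a \<Rightarrow> bool) \<Rightarrow> 'a path" where
  "path_of S = (path_deg S, \<lambda>(p, q). if omega_mor k (path_deg S) p q then seg (cover S q) p q else undefined)"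

lemma directed_hereditaryD:
  assumes "directed_hereditary m S"
  shows "S m" "\<And>a. S a \<Longrightarrow> a \<in> Mor L" "\<And>a b. composable a b \<Longrightarrow> S (cmp L a b) \<Longrightarrow> S a"
    "\<And>a b. S a \<Longrightarrow> S b \<Longrightarrow> \<exists>\<alpha> \<beta>. (\<alpha>, \<beta>) \<in> Lmin L a b \<and> S (cmp L a \<alpha>)"
  using assms unfolding directed_hereditary_def by blast+

lemma directed_hereditary_join:
  assumes g: "directed_hereditary m S" and a: "S a" and b: "S b"
  shows "\<exists>\<nu>. S \<nu> \<and> deg L a \<le> deg L \<nu> \<and> deg L b \<le> deg L \<nu>"
proof -
  obtain \<alpha> \<beta> where ab: "(\<alpha>, \<beta>) \<in> Lmin L a b" "S (cmp L a \<alpha>)" using directed_hereditaryD(4)[OF g a b] by blast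
  then show ?thesis using Lmin_D(6)[OF ab(1)] by (intro exI[of _ "cmp L a \<alpha>"]) simp
qed

lemma directed_hereditary_cover_exists:
  assumes g: "directed_hereditary m S" and q: "q \<in> omega_obj k (path_deg S)"
  shows "\<exists>\<mu>. S \<mu> \<and> q \<le> deg L \<mu>"
proof -
  have ne: "Collect S \<noteq> {}" using directed_hereditaryD(1)[OF g] by blast
  have "\<exists>\<mu>. S \<mu> \<and> (\<forall>i<j. q i \<le> deg L \<mu> i)" for j
  proof (induction j)
    case 0 then show ?case using directed_hereditaryD(1)[OF g] by blast
  next
    case (Suc j)
    then obtain \<mu> where mu: "S \<mu>" "\<forall>i<j. q i \<le> deg L \<mu> i" by blast
    have "enat (q j) \<le> (SUP \<mu>\<in>Collect S. enat (deg L \<mu> j))" using q unfolding omega_obj_def path_deg_def by blast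
    from enat_le_SUP_imp_ex[OF this ne] obtain \<mu>' where mu': "S \<mu>'" "q j \<le> deg L \<mu>' j" by blast
    obtain \<nu> where nu: "S \<nu>" "deg L \<mu> \<le> deg L \<nu>" "deg L \<mu>' \<le> deg L \<nu>"
      using directed_hereditary_join[OF g mu(1) mu'(1)] by blast
    have "\<forall>i<Suc j. q i \<le> deg L \<nu> i"
    proof (intro allI impI)
      fix i assume "i < Suc j"
      then have "i < j \<or> i = j" by auto
      then show "q i \<le> deg L \<nu> i"
      proof
        assume "i < j" then show ?thesis using mu(2) nu(2) unfolding le_fun_def by (meson le_trans)
      next
        assume "i = j" then show ?thesis using mu'(2) nu(3) unfolding le_fun_def by (meson le_trans)
      qed
    qed
    then show ?case using nu(1) by blast
  qed
  then obtain \<mu> where mu: "S \<mu>" "\<forall>i<k. q i \<le> deg L \<mu> i" by blast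
  have "q i \<le> deg L \<mu> i" for i
  proof (cases "i < k")
    case True then show ?thesis using mu(2) by simp
  next
    case False then show ?thesis using q unfolding omega_obj_def by simp
  qed
  then show ?thesis using mu(1) by (auto simp: le_fun_def)
qed

lemma
  assumes g: "directed_hereditary m S" and q: "q \<in> omega_obj k (path_deg S)"
  shows cover_mem: "S (cover S q)" and cover_deg_ge: "q \<le> deg L (cover S q)"
  using someI_ex[OF directed_hereditary_cover_exists[OF g q]] unfolding cover_def by simp_all

lemma seg_independent:
  assumes g: "directed_hereditary m S" and mu: "S \<mu>" "S \<mu>'" and pq: "p \<le> q" and le: "q \<le> deg L \<mu>" "q \<le> deg L \<mu>'"
  shows "seg \<mu> p q = seg \<mu>' p q"
proof -
  obtain \<alpha> \<beta> where ab: "(\<alpha>, \<beta>) \<in> Lmin L \<mu> \<mu>'" using directed_hereditaryD(4)[OF g mu] by blast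
  note d = Lmin_D[OF ab]
  have M: "\<mu> \<in> Mor L" "\<mu>' \<in> Mor L" using directed_hereditaryD(2)[OF g] mu by auto
  have c1: "composable \<mu> \<alpha>" and c2: "composable \<mu>' \<beta>" using M d unfolding composable_def by simp_all
  have "seg \<mu> p q = seg (cmp L \<mu> \<alpha>) p q" using seg_cmp_extend[OF c1 pq le(1)] by simp
  also have "\<dots> = seg (cmp L \<mu>' \<beta>) p q" using d(5) by simp
  also have "\<dots> = seg \<mu>' p q" using seg_cmp_extend[OF c2 pq le(2)] by simp
  finally show ?thesis .
qed

lemma path_of_snd:
  assumes g: "directed_hereditary m S" and o: "omega_mor k (path_deg S) p q" and mu: "S \<mu>" "q \<le> deg L \<mu>"
  shows "snd (path_of S) (p, q) = seg \<mu> p q"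
proof -
  have q: "q \<in> omega_obj k (path_deg S)" and pq: "p \<le> q" using o unfolding omega_mor_def by simp_all
  have "snd (path_of S) (p, q) = seg (cover S q) p q" unfolding path_of_def using o by simp
  also have "\<dots> = seg \<mu> p q" using seg_independent[OF g cover_mem[OF g q] mu(1) pq cover_deg_ge[OF g q] mu(2)] .
  finally show ?thesis .
qed

lemma path_deg_beyond_k:
  assumes g: "directed_hereditary m S" and i: "i \<ge> k"
  shows "path_deg S i = 0"
proof -
  have "path_deg S i \<le> 0" unfolding path_deg_def
  proof (rule SUP_least)
    fix \<mu> assume "\<mu> \<in> Collect S"
    then have "deg L \<mu> i = 0" using directed_hereditaryD(2)[OF g] deg_beyond_k i by simp
    then show "enat (deg L \<mu> i) \<le> 0" by (simp add: zero_enat_def)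
  qed
  then show ?thesis by simp
qed

lemma path_deg_upper:
  assumes "S \<nu>" shows "enat (deg L \<nu> i) \<le> path_deg S i"
  unfolding path_deg_def using assms by (auto intro: SUP_upper)

lemma path_of_in_XL:
  assumes g: "directed_hereditary m S"
  shows "path_of S \<in> XL k L"
proof -
  let ?D = "path_deg S"
  have fst: "fst (path_of S) = ?D" unfolding path_of_def by simp
  have segment: "snd (path_of S) (p, q) \<in> Mor L \<and> deg L (snd (path_of S) (p, q)) = q - p \<and>
        rng L (snd (path_of S) (p, q)) = snd (path_of S) (p, p) \<and> src L (snd (path_of S) (p, q)) = snd (path_of S) (q, q)"
    if o: "omega_mor k ?D p q" for p q
  proof -
    have q: "q \<in> omega_obj k ?D" and pq: "p \<le> q" and p: "p \<in> omega_obj k ?D" using o unfolding omega_mor_def by simp_all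
    let ?\<mu> = "cover S q"
    have mu: "S ?\<mu>" "q \<le> deg L ?\<mu>" using cover_mem[OF g q] cover_deg_ge[OF g q] by simp_all
    have M: "?\<mu> \<in> Mor L" using directed_hereditaryD(2)[OF g mu(1)] .
    have e1: "snd (path_of S) (p, q) = seg ?\<mu> p q" by (rule path_of_snd[OF g o mu])
    have e2: "snd (path_of S) (p, p) = seg ?\<mu> p p"
      by (rule path_of_snd[OF g _ mu(1)]) (use p pq mu(2) in \<open>auto simp: omega_mor_def intro: order_trans\<close>)
    have e3: "snd (path_of S) (q, q) = seg ?\<mu> q q"
      by (rule path_of_snd[OF g _ mu(1)]) (use q mu(2) in \<open>auto simp: omega_mor_def\<close>)
    show ?thesis using e1 e2 e3 seg_in_Mor_deg[OF M pq mu(2)] seg_rng_src[OF M pq mu(2)] by simp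
  qed
  have composition: "cmp L (snd (path_of S) (p, q)) (snd (path_of S) (q, t)) = snd (path_of S) (p, t)"
    if o1: "omega_mor k ?D p q" and o2: "omega_mor k ?D q t" for p q t
  proof -
    have t: "t \<in> omega_obj k ?D" and pq: "p \<le> q" and qt: "q \<le> t" using o1 o2 unfolding omega_mor_def by simp_all
    let ?\<mu> = "cover S t"
    have mu: "S ?\<mu>" "t \<le> deg L ?\<mu>" using cover_mem[OF g t] cover_deg_ge[OF g t] by simp_all
    have M: "?\<mu> \<in> Mor L" using directed_hereditaryD(2)[OF g mu(1)] .
    have o3: "omega_mor k ?D p t" using o1 o2 unfolding omega_mor_def by (auto intro: order_trans)
    have e1: "snd (path_of S) (p, q) = seg ?\<mu> p q" by (rule path_of_snd[OF g o1 mu(1)]) (use qt mu(2) in simp)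
    have e2: "snd (path_of S) (q, t) = seg ?\<mu> q t" by (rule path_of_snd[OF g o2 mu])
    have e3: "snd (path_of S) (p, t) = seg ?\<mu> p t" by (rule path_of_snd[OF g o3 mu])
    show ?thesis using e1 e2 e3 seg_cmp[OF M pq qt mu(2)] by simp
  qed
  have outside: "snd (path_of S) (p, q) = undefined" if "\<not> omega_mor k ?D p q" for p q
    unfolding path_of_def using that by simp
  show ?thesis unfolding XL_def is_path_def mem_Collect_eq fst
    using path_deg_beyond_k[OF g] segment composition outside by blast
qed

lemma starts_with_path_of_iff:
  assumes g: "directed_hereditary m S" and nu: "\<nu> \<in> Mor L"
  shows "starts_with (path_of S) \<nu> \<longleftrightarrow> S \<nu>"
proof
  assume Z: "starts_with (path_of S) \<nu>"
  have x: "path_of S \<in> XL k L" by (rule path_of_in_XL[OF g])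
  have dn: "deg L \<nu> \<in> omega_obj k (path_deg S)" using deg_in_omega_obj[OF nu Z] unfolding path_of_def by simp
  obtain \<mu> where mu: "S \<mu>" "deg L \<nu> \<le> deg L \<mu>" using directed_hereditary_cover_exists[OF g dn] by blast
  have M: "\<mu> \<in> Mor L" using directed_hereditaryD(2)[OF g mu(1)] .
  have o: "omega_mor k (path_deg S) 0 (deg L \<nu>)" using dn zero_in_omega_obj unfolding omega_mor_def by (simp add: le_fun_def)
  have "\<nu> = seg \<mu> 0 (deg L \<nu>)" using path_of_snd[OF g o mu] Z unfolding starts_with_def by simp
  then show "S \<nu>" using directed_hereditaryD(3)[OF g seg_prefix(1)[OF M mu(2)]] seg_prefix(2)[OF M mu(2)] mu(1) by simp
next
  assume S: "S \<nu>"
  have le: "(\<lambda>i. enat (deg L \<nu> i)) \<le> path_deg S" using path_deg_upper[of S \<nu>, OF S] by (simp add: le_fun_def)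
  have dn: "deg L \<nu> \<in> omega_obj k (path_deg S)" using le deg_beyond_k[OF nu] unfolding omega_obj_def le_fun_def by simp
  have o: "omega_mor k (path_deg S) 0 (deg L \<nu>)" using dn zero_in_omega_obj unfolding omega_mor_def by (simp add: le_fun_def)
  have "snd (path_of S) (0, deg L \<nu>) = \<nu>" using path_of_snd[OF g o S order_refl] seg_full[OF nu] by simp
  then show "starts_with (path_of S) \<nu>" unfolding starts_with_def using le unfolding path_of_def by simp
qed

lemma directed_hereditary_segments:
  assumes x: "x \<in> XL k L" and m: "m \<in> Mor L" and Z: "starts_with x m"
  shows "directed_hereditary m (\<lambda>\<nu>. \<nu> \<in> Mor L \<and> starts_with x \<nu>)"
proof -
  have hereditary: "\<forall>a b. composable a b \<longrightarrow> (cmp L a b \<in> Mor L \<and> starts_with x (cmp L a b)) \<longrightarrow> (a \<in> Mor L \<and> starts_with x a)"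
    using starts_with_prefix[OF x] unfolding composable_def by blast
  have directed: "\<exists>\<alpha> \<beta>. (\<alpha>, \<beta>) \<in> Lmin L a b \<and> cmp L a \<alpha> \<in> Mor L \<and> starts_with x (cmp L a \<alpha>)"
    if ab: "a \<in> Mor L" "b \<in> Mor L" "starts_with x a" "starts_with x b" for a b
  proof -
    have n: "sup (deg L a) (deg L b) \<in> omega_obj k (fst x)" using omega_obj_sup deg_in_omega_obj ab by blast
    show ?thesis
      using Lmin_path[OF x ab] cmp_path_join[OF x ab] starts_with_path_init[OF x n] path_init_in_Mor[OF x n]
      by metis
  qed
  show ?thesis unfolding directed_hereditary_def using m Z hereditary directed by blast
qed

lemma path_of_segments:
  assumes x: "x \<in> XL k L" and m: "m \<in> Mor L" and Z: "starts_with x m"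
  shows "path_of (\<lambda>\<nu>. \<nu> \<in> Mor L \<and> starts_with x \<nu>) = x"
proof (rule path_eqI)
  note hd = directed_hereditary_segments[OF x m Z]
  show "path_of (\<lambda>\<nu>. \<nu> \<in> Mor L \<and> starts_with x \<nu>) \<in> XL k L" by (rule path_of_in_XL[OF hd])
  show "starts_with (path_of (\<lambda>\<nu>. \<nu> \<in> Mor L \<and> starts_with x \<nu>)) \<mu> \<longleftrightarrow> starts_with x \<mu>"
    if "\<mu> \<in> Mor L" for \<mu>
    using starts_with_path_of_iff[OF hd that] that by simp
qed (rule x)

end

section \<open>Compactness of the sets \<open>\<Psi>(F)\<close>\<close>

context k_graph
begin

definition germ_topology :: "(('a \<times> 'a) set \<times> 'a path) set topology" where
  "germ_topology = topology_generated_by ({Psi k L F | F. F \<in> SL L} \<union> {GL k L - Psi k L F | F. F \<in> SL L})"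

lemma empty_in_SL: "{} \<in> SL L"
  unfolding SL_def by simp

lemma topspace_germ_topology: "topspace germ_topology = GL k L"
  unfolding germ_topology_def
  using topspace_generated_by_complements Psi_subset_GL empty_in_SL by blast

lemma DF_eq_Union: "DF k L F = (\<Union>(l, m)\<in>F. {x \<in> XL k L. starts_with x m})"
  by (rule set_eqI) (auto simp: DF_iff case_prod_beta)

lemma path_of_image:
  assumes m: "m \<in> Mor L"
  shows "path_of ` {S. directed_hereditary m S} = {x \<in> XL k L. starts_with x m}"
proof
  show "path_of ` {S. directed_hereditary m S} \<subseteq> {x \<in> XL k L. starts_with x m}"
    using path_of_in_XL starts_with_path_of_iff[OF _ m] directed_hereditaryD(1) by blast
  show "{x \<in> XL k L. starts_with x m} \<subseteq> path_of ` {S. directed_hereditary m S}"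
  proof
    fix x assume "x \<in> {x \<in> XL k L. starts_with x m}"
    then have x: "x \<in> XL k L" "starts_with x m" by simp_all
    have "x = path_of (\<lambda>\<nu>. \<nu> \<in> Mor L \<and> starts_with x \<nu>)" using path_of_segments[OF x(1) m x(2)] by simp
    moreover have "directed_hereditary m (\<lambda>\<nu>. \<nu> \<in> Mor L \<and> starts_with x \<nu>)"
      using directed_hereditary_segments[OF x(1) m x(2)] .
    ultimately show "x \<in> path_of ` {S. directed_hereditary m S}" by blast
  qed
qed

lemma germ_path_of_in_Psi_iff:
  assumes F: "F \<in> SL L" and lm: "(l, m) \<in> F" and S: "directed_hereditary m S" and H: "H \<in> SL L"
  shows "germ k L F (path_of S) \<in> Psi k L H \<longleftrightarrow> (\<exists>c\<in>Psi_tests l m H. S c)"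
proof -
  have m: "m \<in> Mor L" using SL_memD[OF F lm] by simp
  have "germ k L F (path_of S) \<in> Psi k L H \<longleftrightarrow> (\<exists>c\<in>Psi_tests l m H. starts_with (path_of S) c)"
    by (rule germ_in_Psi_iff_tests[OF F lm path_of_in_XL[OF S] _ H])
       (use starts_with_path_of_iff[OF S m] directed_hereditaryD(1)[OF S] in simp)
  also have "\<dots> \<longleftrightarrow> (\<exists>c\<in>Psi_tests l m H. S c)"
  proof (rule bex_cong[OF refl])
    fix c assume "c \<in> Psi_tests l m H"
    then have "c \<in> Mor L"
      using cmp_in_Mor Lmin_D(1,3) m unfolding Psi_tests_def composable_def by fastforce
    then show "starts_with (path_of S) c \<longleftrightarrow> S c" by (rule starts_with_path_of_iff[OF S])
  qed
  finally show ?thesis .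
qed

end

locale finitely_aligned_k_graph = k_graph +
  assumes fin_aligned: "finitely_aligned L"
begin

lemma Lmin_finite: "a \<in> Mor L \<Longrightarrow> b \<in> Mor L \<Longrightarrow> finite (Lmin L a b)"
  using fin_aligned unfolding finitely_aligned_def by blast

lemma finite_Psi_tests:
  assumes "m \<in> Mor L" "H \<in> SL L"
  shows "finite (Psi_tests l m H)"
proof -
  have "Psi_tests l m H \<subseteq> (\<lambda>(a, a'). cmp L m a) ` (\<Union>(l', m')\<in>H. Lmin L m m')"
    unfolding Psi_tests_def by force
  moreover have "finite (\<Union>(l', m')\<in>H. Lmin L m m')"
    using SL_finite[OF assms(2)] SL_memD[OF assms(2)] Lmin_finite[OF assms(1)] by auto
  ultimately show ?thesis by (meson finite_imageI finite_subset)
qed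

text \<open>Finite alignment makes the directedness condition closed: it fails exactly when
  \<open>S\<close> contains \<open>a\<close> and \<open>b\<close> but none of the finitely many \<open>a\<alpha>\<close>, \<open>(\<alpha>, \<beta>) \<in> \<Lambda>\<^sup>m\<^sup>i\<^sup>n(a, b)\<close>.\<close>

lemma openin_directedness_failure:
  "openin pred_topology {S. \<not> (a \<in> Mor L \<longrightarrow> b \<in> Mor L \<longrightarrow> S a \<longrightarrow> S b \<longrightarrow>
      (\<exists>\<alpha> \<beta>. (\<alpha>, \<beta>) \<in> Lmin L a b \<and> S (cmp L a \<alpha>)))}"
proof (cases "a \<in> Mor L \<and> b \<in> Mor L")
  case True
  let ?A = "(\<lambda>(\<alpha>, \<beta>). cmp L a \<alpha>) ` Lmin L a b"
  have fin: "finite ?A" using Lmin_finite True by simp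
  have "{S. \<not> (a \<in> Mor L \<longrightarrow> b \<in> Mor L \<longrightarrow> S a \<longrightarrow> S b \<longrightarrow>
      (\<exists>\<alpha> \<beta>. (\<alpha>, \<beta>) \<in> Lmin L a b \<and> S (cmp L a \<alpha>)))} = {S. S a} \<inter> {S. S b} \<inter> {S. \<forall>c\<in>?A. \<not> S c}"
    using True by auto
  then show ?thesis
    by (simp only:) (intro openin_Int openin_pred_topology_holds openin_pred_topology_Ball_fails fin)
qed auto

lemma closedin_directed_hereditary: "closedin pred_topology {S. directed_hereditary m S}"
proof -
  have into_Mor: "openin pred_topology {S. \<not> (S a \<longrightarrow> a \<in> Mor L)}" for a
    using openin_pred_topology_holds[of a] by (cases "a \<in> Mor L") simp_all
  have hereditary: "openin pred_topology {S. \<not> (composable a b \<longrightarrow> S (cmp L a b) \<longrightarrow> S a)}" for a b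
  proof (cases "composable a b")
    case True
    then have "{S. \<not> (composable a b \<longrightarrow> S (cmp L a b) \<longrightarrow> S a)} = {S. S (cmp L a b)} \<inter> {S. \<not> S a}"
      by auto
    then show ?thesis using openin_Int[OF openin_pred_topology_holds openin_pred_topology_fails] by simp
  qed simp
  have "closedin pred_topology ({S. S m} \<inter> {S. \<forall>a. S a \<longrightarrow> a \<in> Mor L} \<inter>
      {S. \<forall>a b. composable a b \<longrightarrow> S (cmp L a b) \<longrightarrow> S a} \<inter>
      {S. \<forall>a b. a \<in> Mor L \<longrightarrow> b \<in> Mor L \<longrightarrow> S a \<longrightarrow> S b \<longrightarrow> (\<exists>\<alpha> \<beta>. (\<alpha>, \<beta>) \<in> Lmin L a b \<and> S (cmp L a \<alpha>))})"
    by (intro closedin_Int closedin_pred_topology_holds closedin_pred_topology_All[OF into_Mor]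
        closedin_pred_topology_All2[OF hereditary] closedin_pred_topology_All2[OF openin_directedness_failure])
  moreover have "{S. directed_hereditary m S} = {S. S m} \<inter> {S. \<forall>a. S a \<longrightarrow> a \<in> Mor L} \<inter>
      {S. \<forall>a b. composable a b \<longrightarrow> S (cmp L a b) \<longrightarrow> S a} \<inter>
      {S. \<forall>a b. a \<in> Mor L \<longrightarrow> b \<in> Mor L \<longrightarrow> S a \<longrightarrow> S b \<longrightarrow> (\<exists>\<alpha> \<beta>. (\<alpha>, \<beta>) \<in> Lmin L a b \<and> S (cmp L a \<alpha>))}"
    unfolding directed_hereditary_def by blast
  ultimately show ?thesis by simp
qed

lemma continuous_map_germ_path_of:
  assumes F: "F \<in> SL L" and lm: "(l, m) \<in> F"
  shows "continuous_map (subtopology pred_topology {S. directed_hereditary m S}) germ_topology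
           (\<lambda>S. germ k L F (path_of S))"
  unfolding germ_topology_def
proof (rule continuous_map_generated_by_complements)
  let ?C = "{S. directed_hereditary m S}"
  have ts: "topspace (subtopology pred_topology ?C) = ?C" by simp
  have m: "m \<in> Mor L" using SL_memD[OF F lm] by simp
  have DF: "path_of S \<in> DF k L F" if "directed_hereditary m S" for S
    unfolding DF_iff using path_of_in_XL[OF that] starts_with_path_of_iff[OF that m] directed_hereditaryD(1)[OF that] lm
    by blast
  show "(\<lambda>S. germ k L F (path_of S)) ` topspace (subtopology pred_topology ?C) \<subseteq> GL k L"
    unfolding ts using germ_in_GL[OF F DF] by blast
  show "Psi k L H \<subseteq> GL k L" if "H \<in> SL L" for H using Psi_subset_GL[OF that] .
  show "SL L \<noteq> {}" using empty_in_SL by blast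
  fix H assume H: "H \<in> SL L"
  note tests = germ_path_of_in_Psi_iff[OF F lm _ H]
  have "{S \<in> ?C. germ k L F (path_of S) \<in> Psi k L H} = ?C \<inter> {S. \<exists>c\<in>Psi_tests l m H. S c}"
    using tests by auto
  then show "openin (subtopology pred_topology ?C)
      {S \<in> topspace (subtopology pred_topology ?C). germ k L F (path_of S) \<in> Psi k L H}"
    unfolding ts by (simp add: openin_subtopology_Int2 openin_pred_topology_Bex)
  have "{S \<in> ?C. germ k L F (path_of S) \<notin> Psi k L H} = ?C \<inter> {S. \<forall>c\<in>Psi_tests l m H. \<not> S c}"
    using tests by auto
  then show "openin (subtopology pred_topology ?C)
      {S \<in> topspace (subtopology pred_topology ?C). germ k L F (path_of S) \<notin> Psi k L H}"
    unfolding ts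
    by (simp add: openin_subtopology_Int2 openin_pred_topology_Ball_fails finite_Psi_tests[OF m H])
qed

lemma compactin_Psi:
  assumes F: "F \<in> SL L"
  shows "compactin germ_topology (Psi k L F)"
proof -
  have "compactin germ_topology ((\<lambda>x. germ k L F x) ` {x \<in> XL k L. starts_with x m})"
    if lm: "(l, m) \<in> F" for l m
  proof -
    have "compactin pred_topology {S. directed_hereditary m S}"
      by (rule closedin_compact_space[OF compact_space_pred_topology closedin_directed_hereditary])
    then have "compactin (subtopology pred_topology {S. directed_hereditary m S}) {S. directed_hereditary m S}"
      unfolding compactin_subtopology by blast
    from image_compactin[OF this continuous_map_germ_path_of[OF F lm]]
    show ?thesis using path_of_image SL_memD[OF F lm] by (simp add: image_image[symmetric])
  qed
  moreover have "Psi k L F = (\<Union>(l, m)\<in>F. (\<lambda>x. germ k L F x) ` {x \<in> XL k L. starts_with x m})"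
    unfolding Psi_eq_image DF_eq_Union by blast
  ultimately show ?thesis
    using SL_finite[OF F] by (auto intro!: compactin_Union)
qed

end

theorem proposition6p3:
  fixes k :: nat and L :: "'a kgraph"
  assumes "is_kgraph k L" and "finitely_aligned L"
  defines "T \<equiv> topology_generated_by
             ({Psi k L F | F. F \<in> SL L} \<union> {GL k L - Psi k L F | F. F \<in> SL L})"
  shows "topspace T = GL k L \<and> Hausdorff_space T \<and> locally_compact_space T \<and>
         (\<forall>F\<in>SL L. compactin T (Psi k L F))"
proof -
  interpret finitely_aligned_k_graph k L
    using assms(1,2) by unfold_locales
  have T: "T = germ_topology" unfolding T_def germ_topology_def ..
  have Psi_GL: "\<And>F. F \<in> SL L \<Longrightarrow> Psi k L F \<subseteq> GL k L" by (rule Psi_subset_GL)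
  have SL: "SL L \<noteq> {}" using empty_in_SL by blast
  have "Hausdorff_space T"
    unfolding T_def by (rule Hausdorff_space_generated_by_complements[OF Psi_GL SL GL_separated_by_Psi])
  moreover have "locally_compact_space T"
    unfolding T_def
  proof (rule locally_compact_space_generated_by_complements[OF Psi_GL SL])
    fix g assume "g \<in> GL k L"
    then obtain F x where "F \<in> SL L" "x \<in> DF k L F" "g = germ k L F x" unfolding GL_def by blast
    then show "\<exists>F\<in>SL L. g \<in> Psi k L F \<and>
        compactin (topology_generated_by ({Psi k L F | F. F \<in> SL L} \<union> {GL k L - Psi k L F | F. F \<in> SL L}))
          (Psi k L F)"
      using germ_in_Psi_self compactin_Psi unfolding germ_topology_def by blast
  qed
  ultimately show ?thesis
    using topspace_germ_topology compactin_Psi unfolding T by blast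
qed

end
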